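(* Let $G$ be a compact commutative group, and let $L^{2}(G)$ be the Banach algebra of square-integrable functions on $G$ with respect to normalized Haar measure, equipped with convolution product. Then for every character $\phi\in\Delta(L^{2}(G))$, the Banach algebra $L^{2}(G)$ is essentially left $\phi$-contractible.
   Context: For a Banach algebra $A$, $\Delta(A)$ denotes the set of all non-zero multiplicative linear functionals (characters) on $A$. A Banach $A$-bimodule $X$ is called neo-unital if $X=A\cdot X\cdot A$, i.e. every $x\in X$ can be written as $x=a\cdot y\cdot b$ with $a,b\in A$, $y\in X$. For $\phi\in\Delta(A)$, the Banach algebra $A$ is called essentially left $\phi$-contractible if for every neo-unital Banach $A$-bimodule $X$ whose right module action is $x\cdot a=\phi(a)x$ ($a\in A$, $x\in X$), every continuous derivation $D:A\to X$ is inner, i.e. there is $x_{0}\in X$ with $D(a)=a\cdot x_{0}-x_{0}\cdot a$ for all $a\in A$. *)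

theory Defs
  imports "HOL-Analysis.Analysis"
begin

definition normalized_haar :: "'a::{topological_ab_group_add,t2_space} measure \<Rightarrow> bool" where
  "normalized_haar \<mu> \<longleftrightarrow>
     sets \<mu> = sets borel \<and> space \<mu> = UNIV \<and> emeasure \<mu> UNIV = 1 \<and>
     (\<forall>A\<in>sets borel. \<forall>g. emeasure \<mu> ((\<lambda>x. g + x) ` A) = emeasure \<mu> A) \<and>
     (\<forall>A\<in>sets borel. emeasure \<mu> A = (INF U\<in>{U. open U \<and> A \<subseteq> U}. emeasure \<mu> U)) \<and>
     (\<forall>U. open U \<longrightarrow> emeasure \<mu> U = (SUP K\<in>{K. compact K \<and> K \<subseteq> U}. emeasure \<mu> K))"

text \<open>Elements of L^2(G) are represented by square-integrable complex functions
(representatives); the L^2 seminorm vanishes exactly on null functions.\<close>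

definition L2 :: "'a measure \<Rightarrow> ('a \<Rightarrow> complex) set" where
  "L2 \<mu> = {f. f \<in> borel_measurable \<mu> \<and> integrable \<mu> (\<lambda>x. (cmod (f x))\<^sup>2)}"

definition l2norm :: "'a measure \<Rightarrow> ('a \<Rightarrow> complex) \<Rightarrow> real" where
  "l2norm \<mu> f = sqrt (LINT x|\<mu>. (cmod (f x))\<^sup>2)"

definition conv :: "'a::ab_group_add measure \<Rightarrow> ('a \<Rightarrow> complex) \<Rightarrow> ('a \<Rightarrow> complex) \<Rightarrow> ('a \<Rightarrow> complex)" where
  "conv \<mu> f g = (\<lambda>x. LINT y|\<mu>. f y * g (x - y))"

definition is_character :: "'a::ab_group_add measure \<Rightarrow> (('a \<Rightarrow> complex) \<Rightarrow> complex) \<Rightarrow> bool" where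
  "is_character \<mu> \<phi> \<longleftrightarrow>
     (\<forall>f\<in>L2 \<mu>. \<forall>g\<in>L2 \<mu>. \<phi> (\<lambda>x. f x + g x) = \<phi> f + \<phi> g) \<and>
     (\<forall>f\<in>L2 \<mu>. \<forall>c. \<phi> (\<lambda>x. c * f x) = c * \<phi> f) \<and>
     (\<forall>f\<in>L2 \<mu>. \<forall>g\<in>L2 \<mu>. \<phi> (conv \<mu> f g) = \<phi> f * \<phi> g) \<and>
     (\<exists>f\<in>L2 \<mu>. \<phi> f \<noteq> 0)"

text \<open>The library has no class of complex normed spaces, so a complex Banach space is a
real Banach space together with a complex scalar multiplication extending the real one.\<close>

definition complex_scalar :: "(complex \<Rightarrow> 'x::banach \<Rightarrow> 'x) \<Rightarrow> bool" where
  "complex_scalar sm \<longleftrightarrow>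
     (\<forall>r x. sm (complex_of_real r) x = r *\<^sub>R x) \<and>
     (\<forall>a b x. sm (a * b) x = sm a (sm b x)) \<and>
     (\<forall>a x y. sm a (x + y) = sm a x + sm a y) \<and>
     (\<forall>a b x. sm (a + b) x = sm a x + sm b x) \<and>
     (\<forall>a x. norm (sm a x) = cmod a * norm x)"

text \<open>Banach L^2(G)-bimodule with left action lm and right action x.a = phi(a) x.\<close>

definition phi_bimodule ::
  "'a::ab_group_add measure \<Rightarrow> (('a \<Rightarrow> complex) \<Rightarrow> complex) \<Rightarrow> (complex \<Rightarrow> 'x::banach \<Rightarrow> 'x)
     \<Rightarrow> (('a \<Rightarrow> complex) \<Rightarrow> 'x \<Rightarrow> 'x) \<Rightarrow> bool" where
  "phi_bimodule \<mu> \<phi> sm lm \<longleftrightarrow>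
     (\<forall>f\<in>L2 \<mu>. \<forall>g\<in>L2 \<mu>. \<forall>x. lm (\<lambda>t. f t + g t) x = lm f x + lm g x) \<and>
     (\<forall>f\<in>L2 \<mu>. \<forall>c x. lm (\<lambda>t. c * f t) x = sm c (lm f x)) \<and>
     (\<forall>f\<in>L2 \<mu>. \<forall>x y. lm f (x + y) = lm f x + lm f y) \<and>
     (\<forall>f\<in>L2 \<mu>. \<forall>c x. lm f (sm c x) = sm c (lm f x)) \<and>
     (\<exists>C. \<forall>f\<in>L2 \<mu>. \<forall>x. norm (lm f x) \<le> C * l2norm \<mu> f * norm x) \<and>
     (\<forall>f\<in>L2 \<mu>. \<forall>g\<in>L2 \<mu>. \<forall>x. lm (conv \<mu> f g) x = lm f (lm g x)) \<and>
     (\<forall>f\<in>L2 \<mu>. \<forall>g\<in>L2 \<mu>. \<forall>x. sm (\<phi> g) (lm f x) = lm f (sm (\<phi> g) x))"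

text \<open>Neo-unital: every x is a.y.b with a, b in L^2(G).\<close>

definition neo_unital ::
  "'a measure \<Rightarrow> (('a \<Rightarrow> complex) \<Rightarrow> complex) \<Rightarrow> (complex \<Rightarrow> 'x \<Rightarrow> 'x)
     \<Rightarrow> (('a \<Rightarrow> complex) \<Rightarrow> 'x \<Rightarrow> 'x) \<Rightarrow> bool" where
  "neo_unital \<mu> \<phi> sm lm \<longleftrightarrow>
     (\<forall>x. \<exists>a\<in>L2 \<mu>. \<exists>b\<in>L2 \<mu>. \<exists>y. x = sm (\<phi> b) (lm a y))"

definition continuous_derivation ::
  "'a::ab_group_add measure \<Rightarrow> (('a \<Rightarrow> complex) \<Rightarrow> complex) \<Rightarrow> (complex \<Rightarrow> 'x::banach \<Rightarrow> 'x)
     \<Rightarrow> (('a \<Rightarrow> complex) \<Rightarrow> 'x \<Rightarrow> 'x) \<Rightarrow> (('a \<Rightarrow> complex) \<Rightarrow> 'x) \<Rightarrow> bool" where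
  "continuous_derivation \<mu> \<phi> sm lm D \<longleftrightarrow>
     (\<forall>f\<in>L2 \<mu>. \<forall>g\<in>L2 \<mu>. D (\<lambda>t. f t + g t) = D f + D g) \<and>
     (\<forall>f\<in>L2 \<mu>. \<forall>c. D (\<lambda>t. c * f t) = sm c (D f)) \<and>
     (\<exists>C. \<forall>f\<in>L2 \<mu>. norm (D f) \<le> C * l2norm \<mu> f) \<and>
     (\<forall>f\<in>L2 \<mu>. \<forall>g\<in>L2 \<mu>. D (conv \<mu> f g) = lm f (D g) + sm (\<phi> g) (D f))"

definition inner_derivation ::
  "'a measure \<Rightarrow> (('a \<Rightarrow> complex) \<Rightarrow> complex) \<Rightarrow> (complex \<Rightarrow> 'x::banach \<Rightarrow> 'x)
     \<Rightarrow> (('a \<Rightarrow> complex) \<Rightarrow> 'x \<Rightarrow> 'x) \<Rightarrow> (('a \<Rightarrow> complex) \<Rightarrow> 'x) \<Rightarrow> bool" where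
  "inner_derivation \<mu> \<phi> sm lm D \<longleftrightarrow>
     (\<exists>x0. \<forall>f\<in>L2 \<mu>. D f = lm f x0 - sm (\<phi> f) x0)"

text \<open>Essential left phi-contractibility of L^2(G), tested against all neo-unital Banach
bimodules whose underlying Banach space lives in the type 'x.\<close>

definition ess_left_phi_contractible ::
  "'x::banach itself \<Rightarrow> 'a::ab_group_add measure \<Rightarrow> (('a \<Rightarrow> complex) \<Rightarrow> complex) \<Rightarrow> bool" where
  "ess_left_phi_contractible _ \<mu> \<phi> \<longleftrightarrow>
     (\<forall>(sm :: complex \<Rightarrow> 'x \<Rightarrow> 'x) lm D.
        complex_scalar sm \<and> phi_bimodule \<mu> \<phi> sm lm \<and> neo_unital \<mu> \<phi> sm lm \<and>
        continuous_derivation \<mu> \<phi> sm lm D \<longrightarrow> inner_derivation \<mu> \<phi> sm lm D)"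

end

theory Submission
  imports Defs
begin

text \<open>
  A character \<open>\<phi>\<close> of \<open>L\<^sup>2(G)\<close> is not assumed continuous, but it is bounded by the sup norm on
  continuous functions: if \<open>|k| \<le> r < 1\<close>, the Neumann series \<open>c = k + k * k + \<dots>\<close> converges and
  satisfies \<open>c * k = c - k\<close>, which rules out \<open>\<phi> k = 1\<close>. As \<open>g * g\<close> is continuous for
  \<open>g \<in> L\<^sup>2(G)\<close>, some continuous \<open>h\<close> has \<open>\<phi> h \<noteq> 0\<close>, and \<open>\<gamma> x = \<phi> (h (\<cdot> - x)) / \<phi> h\<close> is a continuous
  homomorphism \<open>G \<rightarrow> \<complex>\<^sup>*\<close> with \<open>\<phi> f = \<integral> f \<gamma>\<close>. Then \<open>u x = \<gamma> (- x)\<close> satisfies \<open>\<phi> u = 1\<close> and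
  \<open>f * u = \<phi>(f) u\<close>, and expanding \<open>D (f * u)\<close> in two ways shows that every derivation \<open>D\<close> into a
  module with right action \<open>\<phi>\<close> is inner, implemented by \<open>- D u\<close>.
\<close>

lemma vimage_uminus_uminus [simp]: "uminus -` uminus -` A = (A :: 'a::group_add set)"
  by auto

lemma continuous_on_UNIV_openI:
  fixes g :: "'a::t2_space \<Rightarrow> 'b::metric_space"
  assumes "\<And>x e. e > 0 \<Longrightarrow> \<exists>U. open U \<and> x \<in> U \<and> (\<forall>y\<in>U. dist (g y) (g x) < e)"
  shows "continuous_on UNIV g"
proof -
  have "isCont g x" for x
    unfolding continuous_at tendsto_iff
  proof (intro allI impI)
    fix e :: real assume "e > 0"
    then obtain U where "open U" "x \<in> U" "\<forall>y\<in>U. dist (g y) (g x) < e" using assms by blast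
    then show "eventually (\<lambda>y. dist (g y) (g x) < e) (at x)"
      unfolding eventually_at_topological by blast
  qed
  then show ?thesis by (simp add: continuous_on_eq_continuous_at)
qed

lemma continuous_on_group_uniformI:
  fixes F :: "'a::{topological_ab_group_add, t2_space} \<Rightarrow> 'b::metric_space"
  assumes "\<And>e. e > 0 \<Longrightarrow> \<exists>V. open V \<and> 0 \<in> V \<and> (\<forall>x. \<forall>v\<in>V. dist (F (x + v)) (F x) \<le> e)"
  shows "continuous_on UNIV F"
proof (rule continuous_on_UNIV_openI)
  fix x and e :: real assume "e > 0"
  then obtain V where V: "open V" "0 \<in> V" "\<And>x v. v \<in> V \<Longrightarrow> dist (F (x + v)) (F x) \<le> e / 2"
    using assms[of "e / 2"] by auto
  have "open ((\<lambda>y. y - x) -` V)"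
    using V(1) by (intro open_vimage) (auto intro!: continuous_intros)
  moreover have "dist (F y) (F x) < e" if "y \<in> (\<lambda>y. y - x) -` V" for y
    using V(3)[of "y - x" x] that \<open>e > 0\<close> by simp
  ultimately show "\<exists>U. open U \<and> x \<in> U \<and> (\<forall>y\<in>U. dist (F y) (F x) < e)"
    using V(2) by (intro exI[of _ "(\<lambda>y. y - x) -` V"]) auto
qed

lemma continuous_on_compact_UNIV_bounded:
  fixes k :: "'a::topological_space \<Rightarrow> 'b::real_normed_vector"
  assumes "compact (UNIV :: 'a set)" "continuous_on UNIV k"
  obtains B where "\<And>x. norm (k x) \<le> B"
  using compact_imp_bounded[OF compact_continuous_image[OF assms(2,1)]]
  unfolding bounded_iff by blast

lemma compact_group_uniformly_continuous:
  fixes k :: "'a::topological_ab_group_add \<Rightarrow> 'b::metric_space"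
  assumes "compact (UNIV :: 'a set)" and k: "continuous_on UNIV k" and "e > 0"
  obtains V where "open V" "0 \<in> V" "\<And>z v. v \<in> V \<Longrightarrow> dist (k (z + v)) (k z) < e"
proof -
  let ?F = "\<lambda>p::'a \<times> 'a. dist (k (snd p + fst p)) (k (snd p))"
  have "continuous_on UNIV ?F"
    by (intro continuous_on_dist; rule continuous_on_compose2[OF k]) (auto intro!: continuous_intros)
  then have "open {p. ?F p < e}"
    by (rule open_Collect_less) (rule continuous_on_const)
  moreover have "{0} \<times> UNIV \<subseteq> {p. ?F p < e}" using \<open>e > 0\<close> by auto
  ultimately have "\<exists>V. 0 \<in> V \<and> open V \<and> V \<times> UNIV \<subseteq> {p. ?F p < e}"
    by (rule Elementary_Topology.tube_lemma[OF assms(1)])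
  then obtain V where V: "0 \<in> V" "open V" "V \<times> UNIV \<subseteq> {p. ?F p < e}" by blast
  show ?thesis
  proof (rule that[OF V(2,1)])
    fix z v assume "v \<in> V"
    then have "(v, z) \<in> {p. ?F p < e}" using V(3) by blast
    then show "dist (k (z + v)) (k z) < e" by simp
  qed
qed

lemma compact_add_nhds_zero_subset:
  fixes K U :: "'a::topological_ab_group_add set"
  assumes "compact K" "open U" "K \<subseteq> U"
  obtains V where "open V" "0 \<in> V" "\<And>z v. z \<in> K \<Longrightarrow> v \<in> V \<Longrightarrow> z + v \<in> U"
proof -
  have "open ((\<lambda>p::'a \<times> 'a. snd p + fst p) -` U)"
    using assms(2) by (intro open_vimage) (auto intro!: continuous_intros)
  moreover have "{0} \<times> K \<subseteq> (\<lambda>p::'a \<times> 'a. snd p + fst p) -` U" using assms(3) by auto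
  ultimately have "\<exists>V. 0 \<in> V \<and> open V \<and> V \<times> K \<subseteq> (\<lambda>p::'a \<times> 'a. snd p + fst p) -` U"
    by (rule Elementary_Topology.tube_lemma[OF assms(1)])
  then obtain V where V: "0 \<in> V" "open V" "V \<times> K \<subseteq> (\<lambda>p::'a \<times> 'a. snd p + fst p) -` U"
    by blast
  show ?thesis
  proof (rule that[OF V(2,1)])
    fix z v assume "z \<in> K" "v \<in> V"
    then have "(v, z) \<in> (\<lambda>p::'a \<times> 'a. snd p + fst p) -` U" using V(3) by blast
    then show "z + v \<in> U" by simp
  qed
qed

lemma compact_group_borel_partition:
  fixes V :: "'a::topological_ab_group_add set"
  assumes "compact (UNIV :: 'a set)" "open V" "0 \<in> V"
  obtains N and y :: "nat \<Rightarrow> 'a" and B :: "nat \<Rightarrow> 'a set"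
  where "\<And>j. B j \<in> sets borel" "disjoint_family B" "\<And>x. \<exists>j<N. x \<in> B j"
    and "\<And>j b. b \<in> B j \<Longrightarrow> b - y j \<in> V"
proof -
  define T where "T y = (\<lambda>x. x - y) -` V" for y :: 'a
  have open_T: "open (T y)" for y
    unfolding T_def using assms(2) by (intro open_vimage) (auto intro!: continuous_intros)
  have "UNIV \<subseteq> (\<Union>y. T y)" using assms(3) by (auto simp: T_def)
  then obtain Y where "finite Y" "UNIV \<subseteq> (\<Union>y\<in>Y. T y)"
    using compactE_image[OF assms(1), of UNIV T] open_T by metis
  then obtain ys where ys: "set ys = Y" and cover: "UNIV \<subseteq> (\<Union>y\<in>set ys. T y)"
    using finite_list by metis
  define A where "A j = (if j < length ys then T (ys ! j) else {})" for j
  show ?thesis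
  proof
    show "disjointed A j \<in> sets borel" for j
      using open_T unfolding disjointed_def A_def by auto
    show "disjoint_family (disjointed A)" by (rule disjoint_family_disjointed)
    show "\<exists>j<length ys. x \<in> disjointed A j" for x
    proof -
      obtain z where "z \<in> set ys" "x \<in> T z" using cover by blast
      then obtain i where "i < length ys" "x \<in> T (ys ! i)" by (metis in_set_conv_nth)
      then have "x \<in> (\<Union>i\<in>{0..<length ys}. disjointed A i)"
        by (auto simp: finite_UN_disjointed_eq A_def)
      then show ?thesis by auto
    qed
    show "b - ys ! j \<in> V" if "b \<in> disjointed A j" for j b
      using disjointed_subset[of A j] that by (auto simp: A_def T_def split: if_splits)
  qed
qed

lemma sum_indicator_disjoint_family:
  fixes g :: "nat \<Rightarrow> 'b::real_vector"
  assumes "disjoint_family B" "z \<in> B j" "j < N"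
  shows "(\<Sum>i<N. indicator (B i) z *\<^sub>R g i) = g j"
proof -
  have "indicator (B i) z = (if i = j then 1 else (0::real))" for i
    using assms(1,2) unfolding disjoint_family_on_def indicator_def by auto
  then have "(\<Sum>i<N. indicator (B i) z *\<^sub>R g i) = (\<Sum>i<N. (if i = j then g i else 0))"
    by (intro sum.cong) auto
  then show ?thesis using assms(3) by simp
qed

lemma mult_le_weighted_squares:
  fixes a b s :: real
  assumes "s > 0"
  shows "a * b \<le> s / 2 * a\<^sup>2 + 1 / (2 * s) * b\<^sup>2"
proof -
  have "s / 2 * a\<^sup>2 + 1 / (2 * s) * b\<^sup>2 - a * b = (s * a - b)\<^sup>2 / (2 * s)"
    using assms by (simp add: field_simps power2_eq_square)
  moreover have "0 \<le> (s * a - b)\<^sup>2 / (2 * s)" using assms by simp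
  ultimately show ?thesis by linarith
qed

lemma
  fixes f :: "'a \<Rightarrow> 'b::{banach, second_countable_topology}"
  assumes T: "T \<in> measurable M M" and S: "S \<in> measurable M M"
    and TS: "\<And>x. x \<in> space M \<Longrightarrow> T (S x) = x" and preserving: "distr M M T = M"
  shows integrable_comp_measure_preserving_iff: "integrable M (\<lambda>x. f (T x)) \<longleftrightarrow> integrable M f"
    and integral_comp_measure_preserving: "(\<integral>x. f (T x) \<partial>M) = (\<integral>x. f x \<partial>M)"
proof -
  have measurable: "f \<in> borel_measurable M" if "integrable M (\<lambda>x. f (T x))"
  proof -
    have "(\<lambda>x. f (T (S x))) \<in> borel_measurable M"
      using measurable_compose[OF S borel_measurable_integrable[OF that]] .
    then show ?thesis by (rule measurable_cong[THEN iffD1, rotated]) (simp add: TS)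
  qed
  show integrable_iff: "integrable M (\<lambda>x. f (T x)) \<longleftrightarrow> integrable M f"
    using integrable_distr_eq[OF T, of f] preserving measurable borel_measurable_integrable by metis
  show "(\<integral>x. f (T x) \<partial>M) = (\<integral>x. f x \<partial>M)"
  proof (cases "integrable M f")
    case True
    then show ?thesis
      using integral_distr[OF T borel_measurable_integrable[OF True]] preserving by simp
  next
    case False
    then have "\<not> integrable M (\<lambda>x. f (T x))" using integrable_iff by blast
    then show ?thesis using False by (simp add: not_integrable_integral_eq)
  qed
qed

section \<open>Normalized Haar measure on a compact group\<close>

locale compact_haar =
  fixes \<mu> :: "'a::{topological_ab_group_add,t2_space} measure"
  assumes compact_UNIV: "compact (UNIV :: 'a set)"
    and normalized_haar: "normalized_haar \<mu>"
begin

lemma sets_eq_borel [simp, measurable_cong]: "sets \<mu> = sets borel"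
  and space_eq_UNIV [simp]: "space \<mu> = UNIV"
  and emeasure_UNIV: "emeasure \<mu> UNIV = 1"
  and emeasure_add_image: "A \<in> sets borel \<Longrightarrow> emeasure \<mu> ((\<lambda>x. g + x) ` A) = emeasure \<mu> A"
  and outer_regular: "A \<in> sets borel \<Longrightarrow> emeasure \<mu> A = (INF U\<in>{U. open U \<and> A \<subseteq> U}. emeasure \<mu> U)"
  and inner_regular: "open U \<Longrightarrow> emeasure \<mu> U = (SUP K\<in>{K. compact K \<and> K \<subseteq> U}. emeasure \<mu> K)"
  using normalized_haar unfolding normalized_haar_def by auto

sublocale finite_measure \<mu>
  by (rule finite_measureI) (simp add: emeasure_UNIV)

lemma measure_UNIV [simp]: "measure \<mu> UNIV = 1"
  by (simp add: measure_def emeasure_UNIV)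

lemma integrable_indicator_borel [simp]:
  "A \<in> sets borel \<Longrightarrow> integrable \<mu> (indicator A :: 'a \<Rightarrow> real)"
  by (simp add: integrable_indicator_iff emeasure_eq_measure)

lemma borel_measurable_iff_borel: "f \<in> borel_measurable \<mu> \<longleftrightarrow> f \<in> borel_measurable borel"
  by (simp add: measurable_cong_sets[OF sets_eq_borel refl])

lemma continuous_imp_borel_measurable: "continuous_on UNIV f \<Longrightarrow> f \<in> borel_measurable \<mu>"
  by (simp add: borel_measurable_iff_borel borel_measurable_continuous_onI)

lemma measurable_self_iff_borel: "T \<in> measurable \<mu> \<mu> \<longleftrightarrow> T \<in> borel_measurable borel"
  by (simp add: measurable_cong_sets[OF sets_eq_borel sets_eq_borel])

lemma measurable_add_right [measurable]: "(\<lambda>y. y + t) \<in> measurable \<mu> \<mu>"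
  and measurable_uminus [measurable]: "uminus \<in> measurable \<mu> \<mu>"
  by (simp_all add: measurable_self_iff_borel borel_measurable_continuous_onI continuous_intros)

lemma outer_regular_approx:
  assumes "A \<in> sets borel" "e > 0"
  obtains U where "open U" "A \<subseteq> U" "measure \<mu> U \<le> measure \<mu> A + e"
proof -
  have "ennreal (measure \<mu> A) < ennreal (measure \<mu> A + e)"
    using \<open>e > 0\<close> by (simp add: ennreal_lessI)
  then obtain U where "open U" "A \<subseteq> U" "emeasure \<mu> U < ennreal (measure \<mu> A + e)"
    using outer_regular[OF assms(1)] by (auto simp: emeasure_eq_measure INF_less_iff)
  then show ?thesis
    using that ennreal_less_iff[of "measure \<mu> U"] by (simp add: emeasure_eq_measure)
qed

lemma inner_regular_approx:
  assumes "open U" "e > 0"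
  obtains K where "compact K" "K \<subseteq> U" "measure \<mu> U \<le> measure \<mu> K + e"
proof (cases "measure \<mu> U \<le> e")
  case True
  then show ?thesis using that[of "{}"] by simp
next
  case False
  then have "ennreal (measure \<mu> U - e) < ennreal (measure \<mu> U)"
    using \<open>e > 0\<close> by (simp add: ennreal_lessI)
  then obtain K where "compact K" "K \<subseteq> U" "ennreal (measure \<mu> U - e) < emeasure \<mu> K"
    using inner_regular[OF assms(1)] by (auto simp: emeasure_eq_measure less_SUP_iff)
  then show ?thesis
    using that ennreal_less_iff[of "measure \<mu> U - e"] False by (simp add: emeasure_eq_measure)
qed

lemma distr_add_right: "distr \<mu> \<mu> (\<lambda>y. y + t) = \<mu>"
proof (rule measure_eqI)
  fix A assume "A \<in> sets (distr \<mu> \<mu> (\<lambda>y. y + t))"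
  then have A: "A \<in> sets borel" by simp
  have "(\<lambda>y. y + t) -` A = (\<lambda>x. - t + x) ` A"
    by (force simp: algebra_simps)
  then show "emeasure (distr \<mu> \<mu> (\<lambda>y. y + t)) A = emeasure \<mu> A"
    using A emeasure_add_image[OF A, of "- t"] by (simp add: emeasure_distr)
qed simp

lemma
  fixes f :: "'a \<Rightarrow> 'b::{banach, second_countable_topology}"
  shows integrable_add_right_iff: "integrable \<mu> (\<lambda>y. f (y + t)) \<longleftrightarrow> integrable \<mu> f"
    and integral_add_right: "(\<integral>y. f (y + t) \<partial>\<mu>) = (\<integral>y. f y \<partial>\<mu>)"
proof -
  note preserving = measurable_add_right measurable_add_right[of "- t"] _ distr_add_right
  show "integrable \<mu> (\<lambda>y. f (y + t)) \<longleftrightarrow> integrable \<mu> f"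
    by (rule integrable_comp_measure_preserving_iff[OF preserving]) simp
  show "(\<integral>y. f (y + t) \<partial>\<mu>) = (\<integral>y. f y \<partial>\<mu>)"
    by (rule integral_comp_measure_preserving[OF preserving]) simp
qed

lemma measure_vimage_add_right:
  assumes "A \<in> sets borel"
  shows "measure \<mu> ((\<lambda>y. y + t) -` A) = measure \<mu> A"
  using measure_distr[OF measurable_add_right, of A t] assms by (simp add: distr_add_right)

lemma sum_measure_partition:
  fixes B :: "nat \<Rightarrow> 'a set"
  assumes "\<And>j. B j \<in> sets \<mu>" "disjoint_family B" "\<And>x. \<exists>j<N. x \<in> B j"
  shows "(\<Sum>j<N. measure \<mu> (B j)) = 1"
proof -
  have "B ` {..<N} \<subseteq> sets \<mu>" using assms(1) by auto
  moreover have "disjoint_family_on B {..<N}" using assms(2) by (simp add: disjoint_family_on_def)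
  ultimately have "measure \<mu> (\<Union>j\<in>{..<N}. B j) = (\<Sum>j<N. measure \<mu> (B j))"
    by (rule finite_measure_finite_Union[OF finite_lessThan])
  moreover have "(\<Union>j<N. B j) = UNIV" using assms(3) by blast
  ultimately show ?thesis by simp
qed

lemma uminus_vimage_sets: "A \<in> sets borel \<Longrightarrow> uminus -` (A :: 'a set) \<in> sets borel"
  using measurable_sets[OF measurable_uminus, of A] by simp

lemma sum_measure_uminus_translates_le:
  fixes B :: "nat \<Rightarrow> 'a set"
  assumes B: "\<And>j. B j \<in> sets borel" "disjoint_family B" and "open U"
    and KVU: "\<And>z v. z \<in> K \<Longrightarrow> v \<in> V \<Longrightarrow> z + v \<in> U" and near: "\<And>j b. b \<in> B j \<Longrightarrow> b - y j \<in> V"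
  shows "(\<Sum>j<N. measure \<mu> (uminus -` B j) * indicator K (x + y j)) \<le> measure \<mu> (uminus -` U)"
proof -
  define J where "J = {..<N} \<inter> {j. x + y j \<in> K}"
  define m where "m j = measure \<mu> (uminus -` B j)" for j
  have "(\<Sum>j<N. measure \<mu> (uminus -` B j) * indicator K (x + y j))
      = (\<Sum>j<N. if j \<in> {j. x + y j \<in> K} then m j else 0)"
    by (intro sum.cong) (auto simp: m_def indicator_def)
  also have "\<dots> = (\<Sum>j\<in>J. m j)"
    unfolding J_def by (rule sum.inter_restrict[symmetric]) simp
  also have "\<dots> = measure \<mu> (\<Union>j\<in>J. uminus -` B j)"
    unfolding m_def using B uminus_vimage_sets
    by (intro finite_measure_finite_Union[symmetric]) (auto simp: J_def disjoint_family_on_def)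
  also have "\<dots> \<le> measure \<mu> ((\<lambda>c. c + - x) -` (uminus -` U))"
  proof (rule finite_measure_mono)
    show "(\<Union>j\<in>J. uminus -` B j) \<subseteq> (\<lambda>c. c + - x) -` (uminus -` U)"
    proof
      fix c assume "c \<in> (\<Union>j\<in>J. uminus -` B j)"
      then obtain j where "x + y j \<in> K" "- c - y j \<in> V" using near unfolding J_def by blast
      then have "(x + y j) + (- c - y j) \<in> U" by (rule KVU)
      then show "c \<in> (\<lambda>c. c + - x) -` (uminus -` U)" by (simp add: algebra_simps)
    qed
    show "(\<lambda>c. c + - x) -` (uminus -` U) \<in> sets \<mu>"
      using measurable_sets[OF measurable_add_right[of "- x"], of "uminus -` U"] uminus_vimage_sets[of U]
        \<open>open U\<close> by simp
  qed
  also have "\<dots> = measure \<mu> (uminus -` U)"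
    using measure_vimage_add_right[of "uminus -` U" "- x"] uminus_vimage_sets[of U] \<open>open U\<close> by simp
  finally show ?thesis .
qed

text \<open>Averaging the previous bound over \<open>x\<close> turns its left-hand side into \<open>measure \<mu> K\<close>. This gives
  inversion invariance of \<open>\<mu>\<close> without Fubini, which is unavailable because the Borel sets of
  \<open>G \<times> G\<close> need not be generated by rectangles.\<close>

lemma measure_compact_le_uminus:
  assumes K: "compact K" and U: "open U" "K \<subseteq> U"
  shows "measure \<mu> K \<le> measure \<mu> (uminus -` U)"
proof -
  obtain V where V: "open V" "0 \<in> V" "\<And>z v. z \<in> K \<Longrightarrow> v \<in> V \<Longrightarrow> z + v \<in> U"
    by (rule compact_add_nhds_zero_subset[OF K U]) blast
  obtain N and y :: "nat \<Rightarrow> 'a" and B where B: "\<And>j. B j \<in> sets borel" "disjoint_family B"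
    and cover: "\<And>x. \<exists>j<N. x \<in> B j" and near: "\<And>j b. b \<in> B j \<Longrightarrow> b - y j \<in> V"
    by (rule compact_group_borel_partition[OF compact_UNIV V(1,2)]) blast
  define n where "n j = measure \<mu> (uminus -` B j)" for j
  have "(\<Sum>j<N. n j) = 1"
    unfolding n_def using B cover[of "- _"]
    by (intro sum_measure_partition) (auto simp: uminus_vimage_sets disjoint_family_on_def)
  then have "measure \<mu> K = (\<Sum>j<N. n j * measure \<mu> K)"
    by (simp add: sum_distrib_right[symmetric])
  also have "\<dots> = (\<Sum>j<N. (\<integral>x. n j * indicator K (x + y j) \<partial>\<mu>))"
    by (simp add: integral_add_right[of "indicator K :: 'a \<Rightarrow> real"])
  also have "\<dots> = (\<integral>x. (\<Sum>j<N. n j * indicator K (x + y j)) \<partial>\<mu>)"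
    using compact_imp_closed[OF K]
    by (intro Bochner_Integration.integral_sum[symmetric]) (simp add: integrable_add_right_iff)
  also have "\<dots> \<le> (\<integral>x. measure \<mu> (uminus -` U) \<partial>\<mu>)"
    using sum_measure_uminus_translates_le[OF B U(1) V(3) near] compact_imp_closed[OF K]
    by (intro integral_mono Bochner_Integration.integrable_sum) (simp_all add: n_def integrable_add_right_iff)
  also have "\<dots> = measure \<mu> (uminus -` U)" by simp
  finally show ?thesis .
qed

lemma measure_open_le_uminus:
  assumes "open U"
  shows "measure \<mu> U \<le> measure \<mu> (uminus -` U)"
proof -
  have "emeasure \<mu> U \<le> ennreal (measure \<mu> (uminus -` U))"
    unfolding inner_regular[OF assms]
    using measure_compact_le_uminus[OF _ assms] by (auto simp: emeasure_eq_measure intro!: SUP_least)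
  then show ?thesis by (simp add: emeasure_eq_measure)
qed

lemma open_vimage_uminus: "open U \<Longrightarrow> open (uminus -` (U :: 'a set))"
  by (intro open_vimage) (auto intro!: continuous_intros)

lemma measure_uminus_open:
  assumes "open U"
  shows "measure \<mu> (uminus -` U) = measure \<mu> U"
  using measure_open_le_uminus[OF assms] measure_open_le_uminus[OF open_vimage_uminus[OF assms]]
  by simp

lemma measure_uminus_le:
  assumes A: "A \<in> sets borel"
  shows "measure \<mu> (uminus -` A) \<le> measure \<mu> A"
proof -
  have "ennreal (measure \<mu> (uminus -` A)) \<le> emeasure \<mu> U" if "open U" "A \<subseteq> U" for U
  proof -
    have "measure \<mu> (uminus -` A) \<le> measure \<mu> (uminus -` U)"
      using that open_vimage_uminus[OF \<open>open U\<close>] by (intro finite_measure_mono) auto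
    then show ?thesis using measure_uminus_open[OF \<open>open U\<close>] by (simp add: emeasure_eq_measure)
  qed
  then have "ennreal (measure \<mu> (uminus -` A)) \<le> emeasure \<mu> A"
    unfolding outer_regular[OF A] by (auto intro!: INF_greatest)
  then show ?thesis by (simp add: emeasure_eq_measure)
qed

lemma distr_uminus: "distr \<mu> \<mu> uminus = \<mu>"
proof (rule measure_eqI)
  fix A assume "A \<in> sets (distr \<mu> \<mu> uminus)"
  then have A: "A \<in> sets borel" by simp
  then have "uminus -` A \<in> sets borel"
    using measurable_sets[OF measurable_uminus, of A] by simp
  then have "measure \<mu> (uminus -` A) = measure \<mu> A"
    using measure_uminus_le[OF A] measure_uminus_le[of "uminus -` A"] by simp
  then show "emeasure (distr \<mu> \<mu> uminus) A = emeasure \<mu> A"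
    using A by (simp add: emeasure_distr emeasure_eq_measure)
qed simp

lemma
  fixes f :: "'a \<Rightarrow> 'b::{banach, second_countable_topology}"
  shows integrable_reflect_iff: "integrable \<mu> (\<lambda>y. f (x - y)) \<longleftrightarrow> integrable \<mu> f"
    and integral_reflect: "(\<integral>y. f (x - y) \<partial>\<mu>) = (\<integral>y. f y \<partial>\<mu>)"
proof -
  note preserving = measurable_uminus measurable_uminus _ distr_uminus
  have "integrable \<mu> (\<lambda>y. f (x - y)) \<longleftrightarrow> integrable \<mu> (\<lambda>y. f (- y + x))"
    by (simp add: algebra_simps)
  also have "\<dots> \<longleftrightarrow> integrable \<mu> (\<lambda>y. f (y + x))"
    by (rule integrable_comp_measure_preserving_iff[OF preserving]) simp
  finally show "integrable \<mu> (\<lambda>y. f (x - y)) \<longleftrightarrow> integrable \<mu> f"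
    by (simp add: integrable_add_right_iff)
  have "(\<integral>y. f (x - y) \<partial>\<mu>) = (\<integral>y. f (- y + x) \<partial>\<mu>)"
    by (simp add: algebra_simps)
  also have "\<dots> = (\<integral>y. f (y + x) \<partial>\<mu>)"
    by (rule integral_comp_measure_preserving[OF preserving]) simp
  finally show "(\<integral>y. f (x - y) \<partial>\<mu>) = (\<integral>y. f y \<partial>\<mu>)"
    by (simp add: integral_add_right)
qed

section \<open>Square-integrable functions\<close>

lemma integrable_mult_bounded:
  fixes f g :: "'a \<Rightarrow> complex"
  assumes f: "integrable \<mu> f" and g: "g \<in> borel_measurable \<mu>" and bound: "\<And>x. cmod (g x) \<le> B"
  shows "integrable \<mu> (\<lambda>x. f x * g x)"
proof (rule Bochner_Integration.integrable_bound)
  show "integrable \<mu> (\<lambda>x. B * norm (f x))" using f by simp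
  show "(\<lambda>x. f x * g x) \<in> borel_measurable \<mu>" using borel_measurable_integrable[OF f] g by simp
  show "AE x in \<mu>. norm (f x * g x) \<le> norm (B * norm (f x))"
  proof (rule AE_I2)
    fix x
    have "norm (f x * g x) \<le> cmod (f x) * B" by (simp add: norm_mult bound mult_left_mono)
    also have "\<dots> \<le> norm (B * norm (f x))" by (simp add: mult.commute)
    finally show "norm (f x * g x) \<le> norm (B * norm (f x))" .
  qed
qed

lemma integral_norm_le_bound:
  fixes f :: "'a \<Rightarrow> 'b::{banach, second_countable_topology}"
  assumes "integrable \<mu> f" "\<And>x. norm (f x) \<le> B"
  shows "(\<integral>x. norm (f x) \<partial>\<mu>) \<le> B"
  using integral_mono[of \<mu> "\<lambda>x. norm (f x)" "\<lambda>_. B"] assms by simp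

lemma L2_measurable: "f \<in> L2 \<mu> \<Longrightarrow> f \<in> borel_measurable \<mu>"
  and L2_square_integrable: "f \<in> L2 \<mu> \<Longrightarrow> integrable \<mu> (\<lambda>x. (cmod (f x))\<^sup>2)"
  unfolding L2_def by simp_all

lemma L2_integrable:
  assumes "f \<in> L2 \<mu>"
  shows "integrable \<mu> f"
proof (rule Bochner_Integration.integrable_bound)
  show "integrable \<mu> (\<lambda>x. 1 + (cmod (f x))\<^sup>2)"
    using L2_square_integrable[OF assms] by simp
  show "AE x in \<mu>. norm (f x) \<le> norm (1 + (cmod (f x))\<^sup>2)"
  proof (rule AE_I2)
    fix x
    have "2 * cmod (f x) \<le> (cmod (f x))\<^sup>2 + 1" using sum_squares_bound[of "cmod (f x)" 1] by simp
    then have "cmod (f x) \<le> 1 + (cmod (f x))\<^sup>2" using norm_ge_zero[of "f x"] by linarith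
    then show "norm (f x) \<le> norm (1 + (cmod (f x))\<^sup>2)" by simp
  qed
qed (rule L2_measurable[OF assms])

lemma bounded_measurable_in_L2:
  assumes f: "f \<in> borel_measurable \<mu>" and bound: "\<And>x. cmod (f x) \<le> B"
  shows "f \<in> L2 \<mu>"
proof -
  have "integrable \<mu> (\<lambda>x. (cmod (f x))\<^sup>2)"
  proof (rule Bochner_Integration.integrable_bound)
    show "integrable \<mu> (\<lambda>_. B\<^sup>2)" by simp
    show "(\<lambda>x. (cmod (f x))\<^sup>2) \<in> borel_measurable \<mu>" using f by measurable
    show "AE x in \<mu>. norm ((cmod (f x))\<^sup>2) \<le> norm (B\<^sup>2)"
      using bound by (intro AE_I2) (simp add: power_mono)
  qed
  then show ?thesis using f unfolding L2_def by simp
qed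

lemma continuous_in_L2:
  assumes "continuous_on UNIV f"
  shows "f \<in> L2 \<mu>"
proof -
  obtain B where "\<And>x. cmod (f x) \<le> B"
    using continuous_on_compact_UNIV_bounded[OF compact_UNIV assms] by blast
  then show ?thesis
    using bounded_measurable_in_L2 continuous_imp_borel_measurable[OF assms] by blast
qed

lemma L2_add:
  assumes f: "f \<in> L2 \<mu>" and g: "g \<in> L2 \<mu>"
  shows "(\<lambda>x. f x + g x) \<in> L2 \<mu>"
proof -
  have measurable: "(\<lambda>x. f x + g x) \<in> borel_measurable \<mu>"
    using L2_measurable[OF f] L2_measurable[OF g] by measurable
  have "integrable \<mu> (\<lambda>x. (cmod (f x + g x))\<^sup>2)"
  proof (rule Bochner_Integration.integrable_bound)
    show "integrable \<mu> (\<lambda>x. 2 * (cmod (f x))\<^sup>2 + 2 * (cmod (g x))\<^sup>2)"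
      using L2_square_integrable[OF f] L2_square_integrable[OF g] by simp
    show "(\<lambda>x. (cmod (f x + g x))\<^sup>2) \<in> borel_measurable \<mu>" using measurable by measurable
    show "AE x in \<mu>. norm ((cmod (f x + g x))\<^sup>2) \<le> norm (2 * (cmod (f x))\<^sup>2 + 2 * (cmod (g x))\<^sup>2)"
    proof (rule AE_I2)
      fix x
      have "cmod (f x + g x) \<le> cmod (f x) + cmod (g x)" by (rule norm_triangle_ineq)
      then have "(cmod (f x + g x))\<^sup>2 \<le> (cmod (f x) + cmod (g x))\<^sup>2"
        by (rule power_mono) simp
      also have "\<dots> \<le> 2 * (cmod (f x))\<^sup>2 + 2 * (cmod (g x))\<^sup>2"
        unfolding power2_sum using sum_squares_bound[of "cmod (f x)" "cmod (g x)"] by linarith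
      finally show "norm ((cmod (f x + g x))\<^sup>2) \<le> norm (2 * (cmod (f x))\<^sup>2 + 2 * (cmod (g x))\<^sup>2)"
        by simp
    qed
  qed
  then show ?thesis using measurable by (simp add: L2_def)
qed

lemma L2_cmult:
  assumes "f \<in> L2 \<mu>"
  shows "(\<lambda>x. c * f x) \<in> L2 \<mu>"
proof -
  have "(\<lambda>x. c * f x) \<in> borel_measurable \<mu>" using L2_measurable[OF assms] by measurable
  then show ?thesis using assms by (simp add: L2_def norm_mult power_mult_distrib)
qed

lemma L2_diff:
  assumes "f \<in> L2 \<mu>" "g \<in> L2 \<mu>"
  shows "(\<lambda>x. f x - g x) \<in> L2 \<mu>"
  using L2_add[OF assms(1) L2_cmult[OF assms(2), of "- 1"]] by simp

lemma L2_sum: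
  assumes "finite S" "\<And>j. j \<in> S \<Longrightarrow> F j \<in> L2 \<mu>"
  shows "(\<lambda>x. \<Sum>j\<in>S. F j x) \<in> L2 \<mu>"
  using assms
proof (induction S rule: finite_induct)
  case empty
  show ?case using continuous_in_L2[of "\<lambda>_. 0"] by simp
next
  case (insert a S)
  then show ?case using L2_add[of "F a" "\<lambda>x. \<Sum>j\<in>S. F j x"] by simp
qed

lemma L2_add_right:
  assumes "f \<in> L2 \<mu>"
  shows "(\<lambda>y. f (y + t)) \<in> L2 \<mu>"
  using assms integrable_add_right_iff[of "\<lambda>y. (cmod (f y))\<^sup>2" t]
    measurable_compose[OF measurable_add_right L2_measurable]
  by (simp add: L2_def)

lemma L2_diff_right:
  assumes "f \<in> L2 \<mu>"
  shows "(\<lambda>y. f (y - t)) \<in> L2 \<mu>"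
  using L2_add_right[OF assms, of "- t"] by simp

lemma L2_reflect:
  assumes "f \<in> L2 \<mu>"
  shows "(\<lambda>y. f (x - y)) \<in> L2 \<mu>"
proof -
  have "(\<lambda>y. f (- y + x)) \<in> borel_measurable \<mu>"
    using measurable_compose[OF measurable_uminus measurable_compose[OF measurable_add_right L2_measurable[OF assms]]]
    by simp
  then show ?thesis
    using assms integrable_reflect_iff[of "\<lambda>y. (cmod (f y))\<^sup>2" x] by (simp add: L2_def algebra_simps)
qed

lemma integrable_mult_L2:
  assumes "f \<in> L2 \<mu>" "g \<in> L2 \<mu>"
  shows "integrable \<mu> (\<lambda>y. f y * g y)"
proof (rule Bochner_Integration.integrable_bound)
  show "integrable \<mu> (\<lambda>y. (cmod (f y))\<^sup>2 + (cmod (g y))\<^sup>2)"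
    using assms by (simp add: L2_square_integrable)
  show "(\<lambda>y. f y * g y) \<in> borel_measurable \<mu>"
    using L2_measurable[OF assms(1)] L2_measurable[OF assms(2)] by (rule borel_measurable_times)
  show "AE y in \<mu>. norm (f y * g y) \<le> norm ((cmod (f y))\<^sup>2 + (cmod (g y))\<^sup>2)"
  proof (rule AE_I2)
    fix y
    have "2 * (cmod (f y) * cmod (g y)) \<le> (cmod (f y))\<^sup>2 + (cmod (g y))\<^sup>2"
      using sum_squares_bound[of "cmod (f y)" "cmod (g y)"] by simp
    moreover have "0 \<le> cmod (f y) * cmod (g y)" by simp
    ultimately have "cmod (f y) * cmod (g y) \<le> (cmod (f y))\<^sup>2 + (cmod (g y))\<^sup>2" by linarith
    then show "norm (f y * g y) \<le> norm ((cmod (f y))\<^sup>2 + (cmod (g y))\<^sup>2)"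
      by (simp add: norm_mult)
  qed
qed

lemma norm_integral_mult_le:
  assumes f: "f \<in> L2 \<mu>" and g: "g \<in> L2 \<mu>" and "s > 0"
  shows "cmod (\<integral>y. f y * g y \<partial>\<mu>)
    \<le> s / 2 * (\<integral>y. (cmod (f y))\<^sup>2 \<partial>\<mu>) + 1 / (2 * s) * (\<integral>y. (cmod (g y))\<^sup>2 \<partial>\<mu>)"
proof -
  have "cmod (\<integral>y. f y * g y \<partial>\<mu>) \<le> (\<integral>y. cmod (f y * g y) \<partial>\<mu>)"
    by (rule integral_norm_bound)
  also have "\<dots> \<le> (\<integral>y. s / 2 * (cmod (f y))\<^sup>2 + 1 / (2 * s) * (cmod (g y))\<^sup>2 \<partial>\<mu>)"
  proof (rule integral_mono)
    show "integrable \<mu> (\<lambda>y. cmod (f y * g y))"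
      using integrable_norm[OF integrable_mult_L2[OF f g]] .
    show "integrable \<mu> (\<lambda>y. s / 2 * (cmod (f y))\<^sup>2 + 1 / (2 * s) * (cmod (g y))\<^sup>2)"
      using L2_square_integrable[OF f] L2_square_integrable[OF g] by simp
    show "cmod (f y * g y) \<le> s / 2 * (cmod (f y))\<^sup>2 + 1 / (2 * s) * (cmod (g y))\<^sup>2" for y
      using mult_le_weighted_squares[OF \<open>s > 0\<close>, of "cmod (f y)" "cmod (g y)"] by (simp add: norm_mult)
  qed
  also have "\<dots> = s / 2 * (\<integral>y. (cmod (f y))\<^sup>2 \<partial>\<mu>) + 1 / (2 * s) * (\<integral>y. (cmod (g y))\<^sup>2 \<partial>\<mu>)"
    using L2_square_integrable[OF f] L2_square_integrable[OF g] by simp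
  finally show ?thesis .
qed

section \<open>Convolutions\<close>

lemma integrable_conv_continuous:
  fixes f k :: "'a \<Rightarrow> complex"
  assumes f: "integrable \<mu> f" and k: "continuous_on UNIV k"
  shows "integrable \<mu> (\<lambda>y. f y * k (x - y))"
proof -
  have kx: "continuous_on UNIV (\<lambda>y. k (x - y))"
    by (rule continuous_on_compose2[OF k]) (auto intro!: continuous_intros)
  obtain B where "\<And>y. cmod (k (x - y)) \<le> B"
    using continuous_on_compact_UNIV_bounded[OF compact_UNIV kx] by blast
  then show ?thesis
    using integrable_mult_bounded[OF f continuous_imp_borel_measurable[OF kx]] by blast
qed

lemma norm_conv_le:
  assumes f: "integrable \<mu> f" and k: "continuous_on UNIV k" and bound: "\<And>z. cmod (k z) \<le> B"
  shows "cmod (conv \<mu> f k x) \<le> (\<integral>y. cmod (f y) \<partial>\<mu>) * B"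
proof -
  have "cmod (conv \<mu> f k x) \<le> (\<integral>y. cmod (f y * k (x - y)) \<partial>\<mu>)"
    unfolding conv_def by (rule integral_norm_bound)
  also have "\<dots> \<le> (\<integral>y. cmod (f y) * B \<partial>\<mu>)"
  proof (rule integral_mono)
    show "integrable \<mu> (\<lambda>y. cmod (f y * k (x - y)))"
      using integrable_norm[OF integrable_conv_continuous[OF f k]] .
    show "integrable \<mu> (\<lambda>y. cmod (f y) * B)" using f by simp
    show "cmod (f y * k (x - y)) \<le> cmod (f y) * B" for y
      using bound[of "x - y"] by (simp add: norm_mult mult_left_mono)
  qed
  also have "\<dots> = (\<integral>y. cmod (f y) \<partial>\<mu>) * B" by simp
  finally show ?thesis .
qed

lemma conv_add_right_diff:
  assumes f: "integrable \<mu> f" and k: "continuous_on UNIV k"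
  shows "conv \<mu> f k (x + v) - conv \<mu> f k x = conv \<mu> f (\<lambda>z. k (z + v) - k z) x"
  using integrable_conv_continuous[OF f k, of "x + v"] integrable_conv_continuous[OF f k, of x]
  by (simp add: conv_def right_diff_distrib algebra_simps)

lemma continuous_conv_continuous:
  assumes f: "integrable \<mu> f" and k: "continuous_on UNIV k"
  shows "continuous_on UNIV (conv \<mu> f k)"
proof (rule continuous_on_group_uniformI)
  fix e :: real assume "e > 0"
  define I where "I = (\<integral>y. cmod (f y) \<partial>\<mu>)"
  have "I \<ge> 0" unfolding I_def by simp
  then have "e / (I + 1) > 0" using \<open>e > 0\<close> by simp
  then obtain V where V: "open V" "0 \<in> V" "\<And>z v. v \<in> V \<Longrightarrow> dist (k (z + v)) (k z) < e / (I + 1)"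
    using compact_group_uniformly_continuous[OF compact_UNIV k] by metis
  have "dist (conv \<mu> f k (x + v)) (conv \<mu> f k x) \<le> e" if "v \<in> V" for x v
  proof -
    have "continuous_on UNIV (\<lambda>z. k (z + v) - k z)"
      by (intro continuous_intros continuous_on_compose2[OF k]) auto
    moreover have "cmod (k (z + v) - k z) \<le> e / (I + 1)" for z
      using V(3)[OF that, of z] by (simp add: dist_norm)
    ultimately have "cmod (conv \<mu> f (\<lambda>z. k (z + v) - k z) x) \<le> I * (e / (I + 1))"
      unfolding I_def by (rule norm_conv_le[OF f])
    also have "\<dots> \<le> e"
      using \<open>I \<ge> 0\<close> \<open>e > 0\<close> by (simp add: field_simps)
    finally show ?thesis by (simp add: dist_norm conv_add_right_diff[OF f k])
  qed
  then show "\<exists>V. open V \<and> 0 \<in> V \<and> (\<forall>x. \<forall>v\<in>V. dist (conv \<mu> f k (x + v)) (conv \<mu> f k x) \<le> e)"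
    using V(1,2) by blast
qed

lemma conv_diff_right_commute:
  "conv \<mu> (\<lambda>t. f (t - x)) h = conv \<mu> f (\<lambda>t. h (t - x))"
proof
  fix s
  have "conv \<mu> (\<lambda>t. f (t - x)) h s = (\<integral>y. f (y + - x) * h (s - x - (y + - x)) \<partial>\<mu>)"
    by (simp add: conv_def algebra_simps)
  also have "\<dots> = (\<integral>y. f y * h (s - x - y) \<partial>\<mu>)"
    by (rule integral_add_right[of "\<lambda>y. f y * h (s - x - y)"])
  finally show "conv \<mu> (\<lambda>t. f (t - x)) h s = conv \<mu> f (\<lambda>t. h (t - x)) s"
    by (simp add: conv_def algebra_simps)
qed

definition L1_translation_continuous :: "('a \<Rightarrow> 'b::{banach, second_countable_topology}) \<Rightarrow> bool" where
  "L1_translation_continuous f \<longleftrightarrow>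
     (\<forall>e>0. \<exists>V. open V \<and> 0 \<in> V \<and> (\<forall>t\<in>V. (\<integral>y. norm (f (y + t) - f y) \<partial>\<mu>) \<le> e))"

lemma L1_translation_continuousD:
  assumes "L1_translation_continuous f" "e > 0"
  obtains V where "open V" "0 \<in> V" "\<And>t. t \<in> V \<Longrightarrow> (\<integral>y. norm (f (y + t) - f y) \<partial>\<mu>) \<le> e"
proof -
  have "\<exists>V. open V \<and> 0 \<in> V \<and> (\<forall>t\<in>V. (\<integral>y. norm (f (y + t) - f y) \<partial>\<mu>) \<le> e)"
    using assms unfolding L1_translation_continuous_def by simp
  then show ?thesis using that by auto
qed

lemma integrable_indicator_add_right [simp]:
  "A \<in> sets borel \<Longrightarrow> integrable \<mu> (\<lambda>y. indicator A (y + t) :: real)"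
  using integrable_add_right_iff[of "indicator A :: 'a \<Rightarrow> real"] by simp

lemma integral_indicator_add_right [simp]:
  "A \<in> sets borel \<Longrightarrow> (\<integral>y. indicator A (y + t) \<partial>\<mu> :: real) = measure \<mu> A"
  using integral_add_right[of "indicator A :: 'a \<Rightarrow> real"] by simp

lemma L1_translation_continuous_indicator_open:
  assumes U: "open U"
  shows "L1_translation_continuous (indicator U :: 'a \<Rightarrow> real)"
  unfolding L1_translation_continuous_def
proof (intro allI impI)
  fix e :: real assume "e > 0"
  then have "e / 2 > 0" by simp
  obtain K where K: "compact K" "K \<subseteq> U" "measure \<mu> U \<le> measure \<mu> K + e / 2"
    by (rule inner_regular_approx[OF U \<open>e / 2 > 0\<close>]) blast
  obtain V where V: "open V" "0 \<in> V" "\<And>z v. z \<in> K \<Longrightarrow> v \<in> V \<Longrightarrow> z + v \<in> U"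
    by (rule compact_add_nhds_zero_subset[OF K(1) U K(2)]) blast
  have sets: "U \<in> sets borel" "K \<in> sets borel"
    using U compact_imp_closed[OF K(1)] by auto
  have "(\<integral>y. norm (indicator U (y + t) - indicator U y :: real) \<partial>\<mu>) \<le> e" if "t \<in> V" for t
  proof -
    have "norm (indicator U (y + t) - indicator U y :: real)
        \<le> (indicator U (y + t) - indicator K y) + (indicator U y - indicator K y)" for y
      using V(3)[OF _ that] K(2) by (cases "y \<in> K") (auto simp: indicator_def)
    then have "(\<integral>y. norm (indicator U (y + t) - indicator U y :: real) \<partial>\<mu>)
        \<le> (\<integral>y. (indicator U (y + t) - indicator K y) + (indicator U y - indicator K y) \<partial>\<mu>)"
      using sets by (intro integral_mono) auto
    also have "\<dots> = 2 * (measure \<mu> U - measure \<mu> K)"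
      using sets by simp
    finally show ?thesis using K(3) by simp
  qed
  then show "\<exists>V. open V \<and> 0 \<in> V \<and> (\<forall>t\<in>V. (\<integral>y. norm (indicator U (y + t) - indicator U y :: real) \<partial>\<mu>) \<le> e)"
    using V(1,2) by blast
qed

lemma L1_translation_continuous_indicator:
  assumes A: "A \<in> sets borel"
  shows "L1_translation_continuous (indicator A :: 'a \<Rightarrow> real)"
  unfolding L1_translation_continuous_def
proof (intro allI impI)
  fix e :: real assume "e > 0"
  then have "e / 4 > 0" "e / 2 > 0" by simp_all
  obtain U where U: "open U" "A \<subseteq> U" "measure \<mu> U \<le> measure \<mu> A + e / 4"
    by (rule outer_regular_approx[OF A \<open>e / 4 > 0\<close>]) blast
  obtain V where V: "open V" "0 \<in> V"
    and small: "\<And>t. t \<in> V \<Longrightarrow> (\<integral>y. norm (indicator U (y + t) - indicator U y :: real) \<partial>\<mu>) \<le> e / 2"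
    by (rule L1_translation_continuousD[OF L1_translation_continuous_indicator_open[OF U(1)] \<open>e / 2 > 0\<close>])
      blast
  have U_sets: "U \<in> sets borel" using U(1) by simp
  have "(\<integral>y. norm (indicator A (y + t) - indicator A y :: real) \<partial>\<mu>) \<le> e" if "t \<in> V" for t
  proof -
    have "norm (indicator A (y + t) - indicator A y :: real)
        \<le> norm (indicator U (y + t) - indicator U y :: real)
          + (indicator U (y + t) - indicator A (y + t)) + (indicator U y - indicator A y)" for y
      using U(2) by (auto simp: indicator_def)
    then have "(\<integral>y. norm (indicator A (y + t) - indicator A y :: real) \<partial>\<mu>)
        \<le> (\<integral>y. norm (indicator U (y + t) - indicator U y :: real)
          + (indicator U (y + t) - indicator A (y + t)) + (indicator U y - indicator A y) \<partial>\<mu>)"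
      using A U_sets by (intro integral_mono) auto
    also have "\<dots> = (\<integral>y. norm (indicator U (y + t) - indicator U y :: real) \<partial>\<mu>)
        + 2 * (measure \<mu> U - measure \<mu> A)"
      using A U_sets by simp
    finally show ?thesis using small[OF that] U(3) by simp
  qed
  then show "\<exists>V. open V \<and> 0 \<in> V \<and> (\<forall>t\<in>V. (\<integral>y. norm (indicator A (y + t) - indicator A y :: real) \<partial>\<mu>) \<le> e)"
    using V by blast
qed

lemma L1_translation_continuous_scaleR:
  fixes f :: "'a \<Rightarrow> real" and c :: "'b::{banach, second_countable_topology}"
  assumes "L1_translation_continuous f"
  shows "L1_translation_continuous (\<lambda>x. f x *\<^sub>R c)"
  unfolding L1_translation_continuous_def
proof (intro allI impI)
  fix e :: real assume "e > 0"
  then have "e / (norm c + 1) > 0" by (simp add: add_nonneg_pos)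
  then obtain V where V: "open V" "0 \<in> V"
    and small: "\<And>t. t \<in> V \<Longrightarrow> (\<integral>y. norm (f (y + t) - f y) \<partial>\<mu>) \<le> e / (norm c + 1)"
    by (rule L1_translation_continuousD[OF assms]) blast
  have "(\<integral>y. norm (f (y + t) *\<^sub>R c - f y *\<^sub>R c) \<partial>\<mu>) \<le> e" if "t \<in> V" for t
  proof -
    have "(\<integral>y. norm (f (y + t) *\<^sub>R c - f y *\<^sub>R c) \<partial>\<mu>) = (\<integral>y. norm (f (y + t) - f y) \<partial>\<mu>) * norm c"
      by (simp add: scaleR_diff_left[symmetric] del: scaleR_diff_left)
    also have "\<dots> \<le> e / (norm c + 1) * norm c"
      by (rule mult_right_mono[OF small[OF that] norm_ge_zero])
    also have "\<dots> = e * (norm c / (norm c + 1))" by simp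
    also have "\<dots> \<le> e"
      using \<open>e > 0\<close> by (intro mult_left_le) (simp_all add: divide_le_eq_1 add_nonneg_pos)
    finally show ?thesis .
  qed
  then show "\<exists>V. open V \<and> 0 \<in> V \<and> (\<forall>t\<in>V. (\<integral>y. norm (f (y + t) *\<^sub>R c - f y *\<^sub>R c) \<partial>\<mu>) \<le> e)"
    using V by blast
qed

lemma L1_translation_continuous_add:
  fixes f g :: "'a \<Rightarrow> 'b::{banach, second_countable_topology}"
  assumes f: "integrable \<mu> f" "L1_translation_continuous f"
    and g: "integrable \<mu> g" "L1_translation_continuous g"
  shows "L1_translation_continuous (\<lambda>x. f x + g x)"
  unfolding L1_translation_continuous_def
proof (intro allI impI)
  fix e :: real assume "e > 0"
  then have "e / 2 > 0" by simp
  obtain V1 where V1: "open V1" "0 \<in> V1" "\<And>t. t \<in> V1 \<Longrightarrow> (\<integral>y. norm (f (y + t) - f y) \<partial>\<mu>) \<le> e / 2"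
    by (rule L1_translation_continuousD[OF f(2) \<open>e / 2 > 0\<close>]) blast
  obtain V2 where V2: "open V2" "0 \<in> V2" "\<And>t. t \<in> V2 \<Longrightarrow> (\<integral>y. norm (g (y + t) - g y) \<partial>\<mu>) \<le> e / 2"
    by (rule L1_translation_continuousD[OF g(2) \<open>e / 2 > 0\<close>]) blast
  have "(\<integral>y. norm (f (y + t) + g (y + t) - (f y + g y)) \<partial>\<mu>) \<le> e" if "t \<in> V1 \<inter> V2" for t
  proof -
    have integrable: "integrable \<mu> (\<lambda>y. f (y + t))" "integrable \<mu> (\<lambda>y. g (y + t))"
      using f(1) g(1) by (simp_all add: integrable_add_right_iff)
    have "norm (f (y + t) + g (y + t) - (f y + g y)) \<le> norm (f (y + t) - f y) + norm (g (y + t) - g y)"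
      for y
      using norm_triangle_ineq[of "f (y + t) - f y" "g (y + t) - g y"] by (simp add: algebra_simps)
    then have "(\<integral>y. norm (f (y + t) + g (y + t) - (f y + g y)) \<partial>\<mu>)
        \<le> (\<integral>y. norm (f (y + t) - f y) + norm (g (y + t) - g y) \<partial>\<mu>)"
      using integrable f(1) g(1) by (intro integral_mono) auto
    also have "\<dots> = (\<integral>y. norm (f (y + t) - f y) \<partial>\<mu>) + (\<integral>y. norm (g (y + t) - g y) \<partial>\<mu>)"
      using integrable f(1) g(1) by (intro Bochner_Integration.integral_add) auto
    also have "\<dots> \<le> e" using V1(3)[of t] V2(3)[of t] that by simp
    finally show ?thesis .
  qed
  moreover have "open (V1 \<inter> V2)" "0 \<in> V1 \<inter> V2" using V1 V2 by auto
  ultimately show "\<exists>V. open V \<and> 0 \<in> V \<and>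
      (\<forall>t\<in>V. (\<integral>y. norm (f (y + t) + g (y + t) - (f y + g y)) \<partial>\<mu>) \<le> e)"
    by blast
qed

lemma L1_translation_continuous_approx:
  fixes f :: "'a \<Rightarrow> 'b::{banach, second_countable_topology}"
  assumes f: "integrable \<mu> f"
    and approx: "\<And>e. e > 0 \<Longrightarrow>
      \<exists>s. integrable \<mu> s \<and> L1_translation_continuous s \<and> (\<integral>x. norm (f x - s x) \<partial>\<mu>) \<le> e"
  shows "L1_translation_continuous f"
  unfolding L1_translation_continuous_def
proof (intro allI impI)
  fix e :: real assume "e > 0"
  then obtain s where s: "integrable \<mu> s" "L1_translation_continuous s"
    and close: "(\<integral>x. norm (f x - s x) \<partial>\<mu>) \<le> e / 4"
    using approx[of "e / 4"] by auto
  have "e / 2 > 0" using \<open>e > 0\<close> by simp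
  obtain V where V: "open V" "0 \<in> V" "\<And>t. t \<in> V \<Longrightarrow> (\<integral>y. norm (s (y + t) - s y) \<partial>\<mu>) \<le> e / 2"
    by (rule L1_translation_continuousD[OF s(2) \<open>e / 2 > 0\<close>]) blast
  have "(\<integral>y. norm (f (y + t) - f y) \<partial>\<mu>) \<le> e" if "t \<in> V" for t
  proof -
    have fs: "integrable \<mu> (\<lambda>y. norm (f y - s y))" using f s(1) by simp
    have integrable: "integrable \<mu> (\<lambda>y. norm (f (y + t) - s (y + t)))"
      "integrable \<mu> (\<lambda>y. norm (s (y + t) - s y))" "integrable \<mu> (\<lambda>y. f (y + t))"
      using integrable_add_right_iff[of "\<lambda>y. norm (f y - s y)" t] fs
        integrable_add_right_iff[of s t] integrable_add_right_iff[of f t] s(1) f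
      by simp_all
    have "norm (f (y + t) - f y) \<le> norm (f (y + t) - s (y + t)) + norm (s (y + t) - s y) + norm (f y - s y)"
      for y
    proof -
      have "norm (f (y + t) - f y) \<le> norm ((f (y + t) - s (y + t)) + (s (y + t) - s y)) + norm (f y - s y)"
        using norm_triangle_ineq4[of "(f (y + t) - s (y + t)) + (s (y + t) - s y)" "f y - s y"] by simp
      then show ?thesis
        using norm_triangle_ineq[of "f (y + t) - s (y + t)" "s (y + t) - s y"] by linarith
    qed
    then have "(\<integral>y. norm (f (y + t) - f y) \<partial>\<mu>)
        \<le> (\<integral>y. norm (f (y + t) - s (y + t)) + norm (s (y + t) - s y) + norm (f y - s y) \<partial>\<mu>)"
      using integrable fs f by (intro integral_mono) auto
    also have "\<dots> = (\<integral>y. norm (f y - s y) \<partial>\<mu>) + (\<integral>y. norm (s (y + t) - s y) \<partial>\<mu>)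
        + (\<integral>y. norm (f y - s y) \<partial>\<mu>)"
      using integrable fs integral_add_right[of "\<lambda>y. norm (f y - s y)" t] by simp
    finally show ?thesis using V(3)[OF that] close by simp
  qed
  then show "\<exists>V. open V \<and> 0 \<in> V \<and> (\<forall>t\<in>V. (\<integral>y. norm (f (y + t) - f y) \<partial>\<mu>) \<le> e)"
    using V(1,2) by blast
qed

lemma tendsto_integral_norm_diff_dominated:
  fixes f :: "'a \<Rightarrow> 'b::{banach, second_countable_topology}"
  assumes f: "integrable \<mu> f" and s: "\<And>i. integrable \<mu> (s i)"
    and lim: "\<And>x. (\<lambda>i. s i x) \<longlonglongrightarrow> f x" and bound: "\<And>i x. norm (s i x) \<le> 2 * norm (f x)"
  shows "(\<lambda>i. \<integral>x. norm (f x - s i x) \<partial>\<mu>) \<longlonglongrightarrow> 0"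
proof -
  have "(\<lambda>i. \<integral>x. norm (f x - s i x) \<partial>\<mu>) \<longlonglongrightarrow> (\<integral>x. 0 \<partial>\<mu>)"
  proof (rule integral_dominated_convergence[where w="\<lambda>x. 3 * norm (f x)"])
    show "(\<lambda>x. norm (f x - s i x)) \<in> borel_measurable \<mu>" for i
      by (rule borel_measurable_integrable[OF integrable_norm[OF Bochner_Integration.integrable_diff[OF f s]]])
    show "integrable \<mu> (\<lambda>x. 3 * norm (f x))" using f by simp
    show "AE x in \<mu>. (\<lambda>i. norm (f x - s i x)) \<longlonglongrightarrow> 0"
    proof (rule AE_I2)
      fix x
      have "(\<lambda>i. f x - s i x) \<longlonglongrightarrow> f x - f x" by (intro tendsto_intros lim)
      then show "(\<lambda>i. norm (f x - s i x)) \<longlonglongrightarrow> 0" using tendsto_norm_zero by fastforce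
    qed
    show "AE x in \<mu>. norm (norm (f x - s i x)) \<le> 3 * norm (f x)" for i
    proof (rule AE_I2)
      fix x
      show "norm (norm (f x - s i x)) \<le> 3 * norm (f x)"
        using bound[of i x] norm_triangle_ineq4[of "f x" "s i x"] by simp
    qed
  qed simp
  then show ?thesis by simp
qed

lemma integrable_imp_L1_translation_continuous:
  fixes f :: "'a \<Rightarrow> 'b::{banach, second_countable_topology}"
  assumes "integrable \<mu> f"
  shows "L1_translation_continuous f"
  using assms
proof (induction rule: integrable_induct)
  case (base A c)
  then show ?case
    using L1_translation_continuous_scaleR[OF L1_translation_continuous_indicator] by simp
next
  case (add f g)
  then show ?case by (intro L1_translation_continuous_add)
next
  case (lim f s)
  have s_int: "integrable \<mu> (s i)" and s_tc: "L1_translation_continuous (s i)" for i by fact+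
  have f_int: "integrable \<mu> f" by fact
  have "(\<lambda>i. \<integral>x. norm (f x - s i x) \<partial>\<mu>) \<longlonglongrightarrow> 0"
    using lim by (intro tendsto_integral_norm_diff_dominated) simp_all
  then have "\<exists>i. (\<integral>x. norm (f x - s i x) \<partial>\<mu>) \<le> e" if "e > 0" for e
    using eventually_happens'[OF _ order_tendstoD(2)[OF _ that]] by (force intro: less_imp_le)
  then show ?case
    using s_int s_tc by (intro L1_translation_continuous_approx[OF f_int]) blast
qed

lemma continuous_conv_bounded:
  fixes b g :: "'a \<Rightarrow> complex"
  assumes b: "b \<in> borel_measurable \<mu>" "\<And>z. cmod (b z) \<le> M" and g: "integrable \<mu> g"
  shows "continuous_on UNIV (conv \<mu> b g)"
proof (rule continuous_on_group_uniformI)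
  fix e :: real assume "e > 0"
  have "M \<ge> 0" using b(2) norm_ge_zero order_trans by blast
  then have "e / (M + 1) > 0" using \<open>e > 0\<close> by simp
  then obtain V where V: "open V" "0 \<in> V"
    and small: "\<And>t. t \<in> V \<Longrightarrow> (\<integral>y. norm (g (y + t) - g y) \<partial>\<mu>) \<le> e / (M + 1)"
    by (rule L1_translation_continuousD[OF integrable_imp_L1_translation_continuous[OF g]]) blast
  have "dist (conv \<mu> b g (x + v)) (conv \<mu> b g x) \<le> e" if "v \<in> V" for x v
  proof -
    have g_reflect: "integrable \<mu> (\<lambda>y. g (z - y))" for z
      using integrable_reflect_iff g by blast
    have integrable: "integrable \<mu> (\<lambda>y. b y * g (z - y))" for z
      using integrable_mult_bounded[OF g_reflect b] by (simp add: mult.commute)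
    have "conv \<mu> b g (x + v) - conv \<mu> b g x = (\<integral>y. b y * (g (x + v - y) - g (x - y)) \<partial>\<mu>)"
      using integrable[of "x + v"] integrable[of x] by (simp add: conv_def right_diff_distrib)
    then have "dist (conv \<mu> b g (x + v)) (conv \<mu> b g x)
        \<le> (\<integral>y. cmod (b y * (g (x + v - y) - g (x - y))) \<partial>\<mu>)"
      by (simp add: dist_norm integral_norm_bound)
    also have "\<dots> \<le> (\<integral>y. M * cmod (g (x + v - y) - g (x - y)) \<partial>\<mu>)"
    proof (rule integral_mono)
      show "integrable \<mu> (\<lambda>y. cmod (b y * (g (x + v - y) - g (x - y))))"
        using integrable[of "x + v"] integrable[of x] by (simp add: right_diff_distrib)
      show "integrable \<mu> (\<lambda>y. M * cmod (g (x + v - y) - g (x - y)))"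
        using g_reflect[of "x + v"] g_reflect[of x] by simp
      show "cmod (b y * (g (x + v - y) - g (x - y))) \<le> M * cmod (g (x + v - y) - g (x - y))" for y
        using b(2)[of y] by (simp add: norm_mult mult_right_mono)
    qed
    also have "\<dots> = M * (\<integral>y. cmod (g (y + v) - g y) \<partial>\<mu>)"
      using integral_reflect[of "\<lambda>z. cmod (g (z + v) - g z)" x] by (simp add: algebra_simps)
    also have "\<dots> \<le> M * (e / (M + 1))"
      by (rule mult_left_mono[OF small[OF that] \<open>M \<ge> 0\<close>])
    also have "\<dots> \<le> e"
      using \<open>M \<ge> 0\<close> \<open>e > 0\<close> by (simp add: field_simps)
    finally show ?thesis .
  qed
  then show "\<exists>V. open V \<and> 0 \<in> V \<and> (\<forall>x. \<forall>v\<in>V. dist (conv \<mu> b g (x + v)) (conv \<mu> b g x) \<le> e)"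
    using V by blast
qed

lemma norm_conv_L2_le:
  assumes f: "f \<in> L2 \<mu>" and g: "g \<in> L2 \<mu>" and "s > 0"
  shows "cmod (conv \<mu> f g x)
    \<le> s / 2 * (\<integral>y. (cmod (f y))\<^sup>2 \<partial>\<mu>) + 1 / (2 * s) * (\<integral>y. (cmod (g y))\<^sup>2 \<partial>\<mu>)"
  using norm_integral_mult_le[OF f L2_reflect[OF g] \<open>s > 0\<close>, of x]
    integral_reflect[of "\<lambda>y. (cmod (g y))\<^sup>2" x]
  by (simp add: conv_def)

lemma L2_truncation_tendsto:
  assumes f: "f \<in> L2 \<mu>"
  shows "(\<lambda>n. \<integral>y. (cmod (f y - (if cmod (f y) \<le> real n then f y else 0)))\<^sup>2 \<partial>\<mu>) \<longlonglongrightarrow> 0"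
proof -
  have "(\<lambda>n. \<integral>y. (cmod (f y - (if cmod (f y) \<le> real n then f y else 0)))\<^sup>2 \<partial>\<mu>) \<longlonglongrightarrow> (\<integral>y. 0 \<partial>\<mu>)"
  proof (rule integral_dominated_convergence[where w="\<lambda>y. (cmod (f y))\<^sup>2"])
    show "(\<lambda>y. (cmod (f y - (if cmod (f y) \<le> real n then f y else 0)))\<^sup>2) \<in> borel_measurable \<mu>" for n
      using L2_measurable[OF f] by measurable
    show "integrable \<mu> (\<lambda>y. (cmod (f y))\<^sup>2)" by (rule L2_square_integrable[OF f])
    show "AE y in \<mu>. (\<lambda>n. (cmod (f y - (if cmod (f y) \<le> real n then f y else 0)))\<^sup>2) \<longlonglongrightarrow> 0"
    proof (rule AE_I2)
      fix y
      have "eventually (\<lambda>n. cmod (f y) \<le> real n) sequentially"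
        by (rule eventually_sequentiallyI[of "nat \<lceil>cmod (f y)\<rceil>"]) linarith
      then show "(\<lambda>n. (cmod (f y - (if cmod (f y) \<le> real n then f y else 0)))\<^sup>2) \<longlonglongrightarrow> 0"
        by (rule tendsto_eventually[OF eventually_mono]) simp
    qed
    show "AE y in \<mu>. norm ((cmod (f y - (if cmod (f y) \<le> real n then f y else 0)))\<^sup>2) \<le> (cmod (f y))\<^sup>2"
      for n
      by (rule AE_I2) simp
  qed simp
  then show ?thesis by simp
qed

lemma conv_diff_left:
  assumes "f \<in> L2 \<mu>" "F \<in> L2 \<mu>" "g \<in> L2 \<mu>"
  shows "conv \<mu> f g x - conv \<mu> F g x = conv \<mu> (\<lambda>y. f y - F y) g x"
  using integrable_mult_L2[OF assms(1) L2_reflect[OF assms(3)]] integrable_mult_L2[OF assms(2) L2_reflect[OF assms(3)]]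
  by (simp add: conv_def left_diff_distrib)

lemma uniform_limit_conv_L2:
  assumes F: "\<And>n. F n \<in> L2 \<mu>" and f: "f \<in> L2 \<mu>" and g: "g \<in> L2 \<mu>"
    and lim: "(\<lambda>n. \<integral>y. (cmod (f y - F n y))\<^sup>2 \<partial>\<mu>) \<longlonglongrightarrow> 0"
  shows "uniform_limit UNIV (\<lambda>n. conv \<mu> (F n) g) (conv \<mu> f g) sequentially"
  unfolding uniform_limit_iff
proof (intro allI impI)
  fix e :: real assume "e > 0"
  define G where "G = (\<integral>y. (cmod (g y))\<^sup>2 \<partial>\<mu>)"
  define s where "s = (G + 1) / e"
  have "G \<ge> 0" by (simp add: G_def)
  then have "s > 0" "e / s > 0" using \<open>e > 0\<close> by (simp_all add: s_def)
  show "\<forall>\<^sub>F n in sequentially. \<forall>x\<in>UNIV. dist (conv \<mu> (F n) g x) (conv \<mu> f g x) < e"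
  proof (rule eventually_mono[OF order_tendstoD(2)[OF lim \<open>e / s > 0\<close>]], intro ballI)
    fix n x assume small: "(\<integral>y. (cmod (f y - F n y))\<^sup>2 \<partial>\<mu>) < e / s"
    have "dist (conv \<mu> (F n) g x) (conv \<mu> f g x) = cmod (conv \<mu> (\<lambda>y. f y - F n y) g x)"
      using conv_diff_left[OF f F g, of x n] by (simp add: dist_norm norm_minus_commute)
    also have "\<dots> \<le> s / 2 * (\<integral>y. (cmod (f y - F n y))\<^sup>2 \<partial>\<mu>) + 1 / (2 * s) * G"
      unfolding G_def by (rule norm_conv_L2_le[OF L2_diff[OF f F] g \<open>s > 0\<close>])
    also have "\<dots> < s / 2 * (e / s) + 1 / (2 * s) * G"
      using mult_strict_left_mono[OF small, of "s / 2"] \<open>s > 0\<close> by simp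
    also have "\<dots> = e / 2 + e / 2 * (G / (G + 1))"
      using \<open>s > 0\<close> \<open>G \<ge> 0\<close> by (simp add: s_def)
    also have "\<dots> \<le> e / 2 + e / 2 * 1"
      using \<open>e > 0\<close> \<open>G \<ge> 0\<close> by (intro add_left_mono mult_left_mono) simp_all
    finally show "dist (conv \<mu> (F n) g x) (conv \<mu> f g x) < e" by simp
  qed
qed

lemma continuous_conv_L2:
  assumes f: "f \<in> L2 \<mu>" and g: "g \<in> L2 \<mu>"
  shows "continuous_on UNIV (conv \<mu> f g)"
proof -
  define b where "b n y = (if cmod (f y) \<le> real n then f y else 0)" for n y
  have b_measurable: "b n \<in> borel_measurable \<mu>" for n
    using L2_measurable[OF f] unfolding b_def by measurable
  have b_bound: "cmod (b n y) \<le> real n" for n y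
    by (simp add: b_def)
  have "uniform_limit UNIV (\<lambda>n. conv \<mu> (b n) g) (conv \<mu> f g) sequentially"
    using L2_truncation_tendsto[OF f]
    by (intro uniform_limit_conv_L2 f g bounded_measurable_in_L2[OF b_measurable b_bound]) (simp add: b_def)
  moreover have "\<forall>\<^sub>F n in sequentially. continuous_on UNIV (conv \<mu> (b n) g)"
    by (intro always_eventually allI continuous_conv_bounded[OF b_measurable b_bound L2_integrable[OF g]])
  ultimately show ?thesis
    using uniform_limit_theorem[where F=sequentially] by simp
qed

lemma conv_suminf:
  fixes p :: "nat \<Rightarrow> 'a \<Rightarrow> complex"
  assumes p: "\<And>n. integrable \<mu> (p n)" "\<And>n y. cmod (p n y) \<le> a n" "summable a"
    and k: "continuous_on UNIV k" "\<And>z. cmod (k z) \<le> B"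
  shows "conv \<mu> (\<lambda>y. \<Sum>n. p n y) k x = (\<Sum>n. conv \<mu> (p n) k x)"
proof -
  have "B \<ge> 0" using k(2) norm_ge_zero order_trans by blast
  have summable_p: "summable (\<lambda>n. p n y)" for y
    by (rule summable_comparison_test'[OF p(3)]) (simp add: p(2))
  have bound: "cmod (p n y * k (x - y)) \<le> a n * B" for n y
    using mult_mono'[OF p(2) k(2) norm_ge_zero norm_ge_zero] by (simp add: norm_mult)
  have "conv \<mu> (\<lambda>y. \<Sum>n. p n y) k x = (\<integral>y. (\<Sum>n. p n y * k (x - y)) \<partial>\<mu>)"
    unfolding conv_def by (simp add: suminf_mult2[OF summable_p])
  also have "\<dots> = (\<Sum>n. (\<integral>y. p n y * k (x - y) \<partial>\<mu>))"
  proof (rule integral_suminf)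
    show "integrable \<mu> (\<lambda>y. p n y * k (x - y))" for n
      by (rule integrable_conv_continuous[OF p(1) k(1)])
    have "summable (\<lambda>n. cmod (p n y * k (x - y)))" for y
      by (rule summable_comparison_test'[OF summable_mult2[OF p(3), of B]]) (simp add: bound)
    then show "AE y in \<mu>. summable (\<lambda>n. cmod (p n y * k (x - y)))" by simp
    show "summable (\<lambda>n. \<integral>y. cmod (p n y * k (x - y)) \<partial>\<mu>)"
    proof (rule summable_comparison_test'[OF summable_mult2[OF p(3), of B]])
      fix n
      have "(\<integral>y. cmod (p n y * k (x - y)) \<partial>\<mu>) \<le> a n * B"
        by (rule integral_norm_le_bound[OF integrable_conv_continuous[OF p(1) k(1)] bound])
      then show "norm (\<integral>y. cmod (p n y * k (x - y)) \<partial>\<mu>) \<le> a n * B" by simp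
    qed
  qed
  finally show ?thesis by (simp add: conv_def)
qed

lemma suminf_in_L2:
  fixes p :: "nat \<Rightarrow> 'a \<Rightarrow> complex"
  assumes p: "\<And>n. p n \<in> borel_measurable \<mu>" "\<And>n x. cmod (p n x) \<le> a n" and "summable a"
  shows "(\<lambda>x. \<Sum>n. p n x) \<in> L2 \<mu>"
proof (rule bounded_measurable_in_L2)
  have summable_norm_p: "summable (\<lambda>n. cmod (p n x))" for x
    by (rule summable_comparison_test'[OF \<open>summable a\<close>]) (simp add: p(2))
  show "(\<lambda>x. \<Sum>n. p n x) \<in> borel_measurable \<mu>"
  proof (rule borel_measurable_LIMSEQ_metric)
    show "(\<lambda>x. \<Sum>i<n. p i x) \<in> borel_measurable \<mu>" for n
      using p(1) by (rule borel_measurable_sum)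
    show "(\<lambda>n. \<Sum>i<n. p i x) \<longlonglongrightarrow> (\<Sum>n. p n x)" for x
      using summable_LIMSEQ[OF summable_norm_cancel[OF summable_norm_p]] .
  qed
  show "cmod (\<Sum>n. p n x) \<le> (\<Sum>n. a n)" for x
    using summable_norm[OF summable_norm_p] suminf_le[OF p(2) summable_norm_p \<open>summable a\<close>]
    by (rule order_trans)
qed

definition conv_power :: "('a \<Rightarrow> complex) \<Rightarrow> nat \<Rightarrow> 'a \<Rightarrow> complex" where
  "conv_power k n = ((\<lambda>q. conv \<mu> q k) ^^ n) k"

lemma conv_power_0 [simp]: "conv_power k 0 = k"
  and conv_power_Suc: "conv_power k (Suc n) = conv \<mu> (conv_power k n) k"
  by (simp_all add: conv_power_def)

lemma conv_power_continuous_bound: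
  assumes k: "continuous_on UNIV k" and bound: "\<And>x. cmod (k x) \<le> r"
  shows "continuous_on UNIV (conv_power k n) \<and> (\<forall>x. cmod (conv_power k n x) \<le> r ^ Suc n)"
proof (induction n)
  case 0
  show ?case using k bound by simp
next
  case (Suc n)
  have "r \<ge> 0" using bound norm_ge_zero order_trans by blast
  from Suc have integrable: "integrable \<mu> (conv_power k n)"
    using L2_integrable[OF continuous_in_L2] by blast
  have "cmod (conv_power k (Suc n) x) \<le> r ^ Suc n * r" for x
  proof -
    have "cmod (conv_power k (Suc n) x) \<le> (\<integral>y. cmod (conv_power k n y) \<partial>\<mu>) * r"
      unfolding conv_power_Suc by (rule norm_conv_le[OF integrable k bound])
    also have "\<dots> \<le> r ^ Suc n * r"
      using Suc integrable by (intro mult_right_mono integral_norm_le_bound \<open>r \<ge> 0\<close>) auto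
    finally show ?thesis .
  qed
  then show ?case
    using continuous_conv_continuous[OF integrable k] by (simp add: conv_power_Suc mult.commute)
qed

lemma conv_neumann_series:
  fixes k :: "'a \<Rightarrow> complex"
  assumes k: "continuous_on UNIV k" and bound: "\<And>x. cmod (k x) \<le> r" and "r < 1"
  obtains c where "c \<in> L2 \<mu>" "conv \<mu> c k = (\<lambda>x. c x - k x)"
proof -
  have "r \<ge> 0" using bound norm_ge_zero order_trans by blast
  have p_integrable: "integrable \<mu> (conv_power k n)" and p_bound: "cmod (conv_power k n x) \<le> r ^ Suc n"
    for n x
    using conv_power_continuous_bound[OF k bound] L2_integrable[OF continuous_in_L2] by blast+
  have summable: "summable (\<lambda>n. r ^ Suc n)"
    using summable_mult[OF summable_geometric[of r], of r] \<open>r \<ge> 0\<close> \<open>r < 1\<close> by (simp add: power_Suc)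
  define c where "c x = (\<Sum>n. conv_power k n x)" for x
  have "c \<in> L2 \<mu>"
    unfolding c_def by (rule suminf_in_L2[OF borel_measurable_integrable[OF p_integrable] p_bound summable])
  moreover have "conv \<mu> c k = (\<lambda>x. c x - k x)"
  proof
    fix x
    have "summable (\<lambda>n. conv_power k n x)"
      by (rule summable_comparison_test'[OF summable]) (simp add: p_bound del: power_Suc)
    moreover have "conv \<mu> c k x = (\<Sum>n. conv_power k (Suc n) x)"
      unfolding c_def conv_power_Suc by (rule conv_suminf[OF p_integrable p_bound summable k bound])
    ultimately show "conv \<mu> c k x = c x - k x"
      unfolding c_def using suminf_split_head by fastforce
  qed
  ultimately show ?thesis by (rule that)
qed

lemma norm_integral_mult_sub_step_le:
  fixes f g :: "'a \<Rightarrow> complex" and w :: "nat \<Rightarrow> complex"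
  assumes f: "integrable \<mu> f" and g: "g \<in> borel_measurable \<mu>" "\<And>z. cmod (g z) \<le> M"
    and B: "\<And>j. B j \<in> sets borel" "disjoint_family B" "\<And>x. \<exists>j<N. x \<in> B j"
    and close: "\<And>j z. j < N \<Longrightarrow> z \<in> B j \<Longrightarrow> cmod (g z - w j) \<le> e"
  shows "cmod ((\<integral>z. f z * g z \<partial>\<mu>) - (\<Sum>j<N. (\<integral>z. indicator (B j) z *\<^sub>R f z \<partial>\<mu>) * w j))
     \<le> (\<integral>z. cmod (f z) \<partial>\<mu>) * e"
proof -
  have restrict: "integrable \<mu> (\<lambda>z. indicator (B j) z *\<^sub>R f z)" for j
    using B(1) f by (intro integrable_mult_indicator) auto
  have step: "integrable \<mu> (\<lambda>z. \<Sum>j<N. (indicator (B j) z *\<^sub>R f z) * w j)"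
    using restrict by (intro Bochner_Integration.integrable_sum Bochner_Integration.integrable_mult_left)
  have fg: "integrable \<mu> (\<lambda>z. f z * g z)" by (rule integrable_mult_bounded[OF f g])
  have "(\<Sum>j<N. (\<integral>z. indicator (B j) z *\<^sub>R f z \<partial>\<mu>) * w j)
      = (\<Sum>j<N. (\<integral>z. (indicator (B j) z *\<^sub>R f z) * w j \<partial>\<mu>))"
    by (intro sum.cong refl) (simp only: Bochner_Integration.integral_mult_left[OF restrict])
  also have "\<dots> = (\<integral>z. (\<Sum>j<N. (indicator (B j) z *\<^sub>R f z) * w j) \<partial>\<mu>)"
    by (rule Bochner_Integration.integral_sum[symmetric])
      (rule Bochner_Integration.integrable_mult_left[OF restrict])
  finally have "(\<integral>z. f z * g z \<partial>\<mu>) - (\<Sum>j<N. (\<integral>z. indicator (B j) z *\<^sub>R f z \<partial>\<mu>) * w j)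
      = (\<integral>z. f z * g z - (\<Sum>j<N. (indicator (B j) z *\<^sub>R f z) * w j) \<partial>\<mu>)"
    using fg step by simp
  also have "cmod \<dots> \<le> (\<integral>z. cmod (f z * g z - (\<Sum>j<N. (indicator (B j) z *\<^sub>R f z) * w j)) \<partial>\<mu>)"
    by (rule integral_norm_bound)
  also have "\<dots> \<le> (\<integral>z. cmod (f z) * e \<partial>\<mu>)"
  proof (rule integral_mono)
    fix z
    obtain j where j: "j < N" "z \<in> B j" using B(3) by blast
    have "(\<Sum>i<N. (indicator (B i) z *\<^sub>R f z) * w i) = (\<Sum>i<N. indicator (B i) z *\<^sub>R (f z * w i))"
      by simp
    also have "\<dots> = f z * w j" by (rule sum_indicator_disjoint_family[OF B(2) j(2,1)])
    finally show "cmod (f z * g z - (\<Sum>j<N. (indicator (B j) z *\<^sub>R f z) * w j)) \<le> cmod (f z) * e"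
      using close[OF j] by (simp add: right_diff_distrib[symmetric] norm_mult mult_left_mono)
  qed (use fg step f in auto)
  also have "\<dots> = (\<integral>z. cmod (f z) \<partial>\<mu>) * e" by simp
  finally show ?thesis .
qed

end

section \<open>Characters of the convolution algebra\<close>

locale L2_character = compact_haar \<mu> for \<mu> :: "'a::{topological_ab_group_add, t2_space} measure" +
  fixes \<phi> :: "('a \<Rightarrow> complex) \<Rightarrow> complex"
  assumes is_character: "is_character \<mu> \<phi>"
begin

lemma character_add: "f \<in> L2 \<mu> \<Longrightarrow> g \<in> L2 \<mu> \<Longrightarrow> \<phi> (\<lambda>x. f x + g x) = \<phi> f + \<phi> g"
  and character_scale: "f \<in> L2 \<mu> \<Longrightarrow> \<phi> (\<lambda>x. c * f x) = c * \<phi> f"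
  and character_conv: "f \<in> L2 \<mu> \<Longrightarrow> g \<in> L2 \<mu> \<Longrightarrow> \<phi> (conv \<mu> f g) = \<phi> f * \<phi> g"
  and character_nonzero: "\<exists>f\<in>L2 \<mu>. \<phi> f \<noteq> 0"
  using is_character unfolding is_character_def by simp_all

lemma character_diff:
  assumes "f \<in> L2 \<mu>" "g \<in> L2 \<mu>"
  shows "\<phi> (\<lambda>x. f x - g x) = \<phi> f - \<phi> g"
  using character_add[OF assms(1) L2_cmult[OF assms(2), of "- 1"]] character_scale[OF assms(2), of "- 1"]
  by simp

lemma character_sum:
  assumes "finite S" "\<And>j. j \<in> S \<Longrightarrow> F j \<in> L2 \<mu>"
  shows "\<phi> (\<lambda>x. \<Sum>j\<in>S. F j x) = (\<Sum>j\<in>S. \<phi> (F j))"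
  using assms
proof (induction S rule: finite_induct)
  case empty
  show ?case using character_scale[OF continuous_in_L2[of "\<lambda>_. 0"], of 0] by simp
next
  case (insert a S)
  then show ?case using character_add[OF _ L2_sum[OF insert.hyps(1)], of "F a" F] by simp
qed

lemma character_ne_one:
  assumes "continuous_on UNIV k" "\<And>x. cmod (k x) \<le> r" "r < 1"
  shows "\<phi> k \<noteq> 1"
proof
  assume "\<phi> k = 1"
  obtain c where c: "c \<in> L2 \<mu>" "conv \<mu> c k = (\<lambda>x. c x - k x)"
    by (rule conv_neumann_series[OF assms]) blast
  have "\<phi> c * \<phi> k = \<phi> c - \<phi> k"
    using character_conv[OF c(1) continuous_in_L2[OF assms(1)]] c(2)
      character_diff[OF c(1) continuous_in_L2[OF assms(1)]] by simp
  then show False using \<open>\<phi> k = 1\<close> by simp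
qed

lemma norm_character_le:
  assumes k: "continuous_on UNIV k" and bound: "\<And>x. cmod (k x) \<le> s"
  shows "cmod (\<phi> k) \<le> s"
proof (rule ccontr)
  assume "\<not> cmod (\<phi> k) \<le> s"
  then have less: "s < cmod (\<phi> k)" by simp
  moreover have "0 \<le> s" using bound norm_ge_zero order_trans by blast
  ultimately have nonzero: "\<phi> k \<noteq> 0" by auto
  have "\<phi> (\<lambda>x. inverse (\<phi> k) * k x) = 1"
    using character_scale[OF continuous_in_L2[OF k]] nonzero by simp
  moreover have "continuous_on UNIV (\<lambda>x. inverse (\<phi> k) * k x)"
    by (intro continuous_intros k)
  moreover have "cmod (inverse (\<phi> k) * k x) \<le> s / cmod (\<phi> k)" for x
    using divide_right_mono[OF bound[of x], of "cmod (\<phi> k)"] by (simp add: norm_mult norm_inverse norm_divide field_simps)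
  moreover have "s / cmod (\<phi> k) < 1" using less nonzero by simp
  ultimately show False using character_ne_one by blast
qed

lemma exists_continuous_character_nonzero:
  obtains h where "continuous_on UNIV h" "\<phi> h \<noteq> 0"
proof -
  obtain g where g: "g \<in> L2 \<mu>" "\<phi> g \<noteq> 0" using character_nonzero by blast
  show ?thesis
    by (rule that[OF continuous_conv_L2[OF g(1) g(1)]]) (simp add: character_conv[OF g(1) g(1)] g(2))
qed

end

locale L2_character_test_function = L2_character +
  fixes h :: "'a \<Rightarrow> complex"
  assumes continuous_h: "continuous_on UNIV h" and character_h: "\<phi> h \<noteq> 0"
begin

definition \<gamma> :: "'a \<Rightarrow> complex" where
  "\<gamma> x = \<phi> (\<lambda>t. h (t - x)) / \<phi> h"

lemma h_in_L2: "h \<in> L2 \<mu>"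
  by (rule continuous_in_L2[OF continuous_h])

lemma character_h_translate: "\<phi> (\<lambda>t. h (t - x)) = \<gamma> x * \<phi> h"
  using character_h by (simp add: \<gamma>_def)

lemma character_translate:
  assumes f: "f \<in> L2 \<mu>"
  shows "\<phi> (\<lambda>t. f (t - x)) = \<gamma> x * \<phi> f"
proof -
  have "\<phi> (\<lambda>t. f (t - x)) * \<phi> h = \<phi> (conv \<mu> (\<lambda>t. f (t - x)) h)"
    by (rule character_conv[OF L2_diff_right[OF f] h_in_L2, symmetric])
  also have "\<dots> = \<phi> f * \<phi> (\<lambda>t. h (t - x))"
    by (simp add: conv_diff_right_commute character_conv[OF f L2_diff_right[OF h_in_L2]])
  finally show ?thesis using character_h by (simp add: character_h_translate)
qed

lemma gamma_zero: "\<gamma> 0 = 1"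
  using character_h by (simp add: \<gamma>_def)

lemma gamma_add: "\<gamma> (x + y) = \<gamma> x * \<gamma> y"
proof -
  have "\<gamma> (x + y) * \<phi> h = \<phi> (\<lambda>t. (\<lambda>s. h (s - y)) (t - x))"
    by (simp add: character_h_translate algebra_simps)
  also have "\<dots> = \<gamma> x * \<gamma> y * \<phi> h"
    by (simp add: character_translate[OF L2_diff_right[OF h_in_L2]] character_h_translate)
  finally show ?thesis using character_h by simp
qed

lemma continuous_gamma: "continuous_on UNIV \<gamma>"
proof (rule continuous_on_group_uniformI)
  fix e :: real assume "e > 0"
  then have "e * cmod (\<phi> h) > 0" using character_h by simp
  then obtain V where V: "open V" "0 \<in> V" "\<And>z v. v \<in> V \<Longrightarrow> dist (h (z + v)) (h z) < e * cmod (\<phi> h)"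
    by (rule compact_group_uniformly_continuous[OF compact_UNIV continuous_h]) blast
  have "dist (\<gamma> (x + v)) (\<gamma> x) \<le> e" if "v \<in> V" for x v
  proof -
    have "(\<gamma> (x + v) - \<gamma> x) * \<phi> h = \<phi> (\<lambda>t. h (t - (x + v)) - h (t - x))"
      by (simp add: character_diff L2_diff_right[OF h_in_L2] character_h_translate algebra_simps)
    also have "cmod \<dots> \<le> e * cmod (\<phi> h)"
    proof (rule norm_character_le)
      show "continuous_on UNIV (\<lambda>t. h (t - (x + v)) - h (t - x))"
        by (intro continuous_intros continuous_on_compose2[OF continuous_h]) auto
      show "cmod (h (t - (x + v)) - h (t - x)) \<le> e * cmod (\<phi> h)" for t
        using V(3)[OF that, of "t - (x + v)"] by (simp add: dist_norm norm_minus_commute)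
    qed
    finally show ?thesis using character_h by (simp add: dist_norm norm_mult)
  qed
  then show "\<exists>V. open V \<and> 0 \<in> V \<and> (\<forall>x. \<forall>v\<in>V. dist (\<gamma> (x + v)) (\<gamma> x) \<le> e)"
    using V(1,2) by blast
qed

text \<open>\<open>\<phi> f * \<phi> h = \<phi> (f * h)\<close>, and \<open>f * h\<close> is uniformly close to a combination of translates of \<open>h\<close>,
  on which \<open>\<phi>\<close> is given by \<open>\<gamma>\<close>; the sup-norm bound on \<open>\<phi>\<close> controls the error.\<close>

lemma norm_character_sub_riemann_sum_le:
  fixes B :: "nat \<Rightarrow> 'a set" and y :: "nat \<Rightarrow> 'a"
  assumes f: "f \<in> L2 \<mu>" and B: "\<And>j. B j \<in> sets borel" "disjoint_family B" "\<And>x. \<exists>j<N. x \<in> B j"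
    and close: "\<And>j z s. z \<in> B j \<Longrightarrow> cmod (h (s - z) - h (s - y j)) \<le> \<delta>"
  shows "cmod (\<phi> f - (\<Sum>j<N. (\<integral>z. indicator (B j) z *\<^sub>R f z \<partial>\<mu>) * \<gamma> (y j))) * cmod (\<phi> h)
    \<le> (\<integral>z. cmod (f z) \<partial>\<mu>) * \<delta>"
proof -
  have f_int: "integrable \<mu> f" by (rule L2_integrable[OF f])
  obtain M where M: "\<And>z. cmod (h z) \<le> M"
    using continuous_on_compact_UNIV_bounded[OF compact_UNIV continuous_h] by blast
  define c where "c j = (\<integral>z. indicator (B j) z *\<^sub>R f z \<partial>\<mu>)" for j
  define R where "R s = (\<Sum>j<N. c j * h (s - y j))" for s
  have conv_continuous: "continuous_on UNIV (conv \<mu> f h)"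
    by (rule continuous_conv_continuous[OF f_int continuous_h])
  have R_continuous: "continuous_on UNIV R"
    unfolding R_def by (intro continuous_intros continuous_on_compose2[OF continuous_h]) auto
  have "\<phi> R = (\<Sum>j<N. c j * \<gamma> (y j)) * \<phi> h"
    unfolding R_def
    by (subst character_sum) (auto simp: L2_cmult L2_diff_right h_in_L2 character_scale
        character_h_translate sum_distrib_right mult.assoc)
  then have "\<phi> (\<lambda>s. conv \<mu> f h s - R s) = (\<phi> f - (\<Sum>j<N. c j * \<gamma> (y j))) * \<phi> h"
    using character_diff[OF continuous_in_L2[OF conv_continuous] continuous_in_L2[OF R_continuous]]
      character_conv[OF f h_in_L2]
    by (simp add: algebra_simps)
  moreover have "cmod (\<phi> (\<lambda>s. conv \<mu> f h s - R s)) \<le> (\<integral>z. cmod (f z) \<partial>\<mu>) * \<delta>"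
  proof (rule norm_character_le)
    show "continuous_on UNIV (\<lambda>s. conv \<mu> f h s - R s)"
      by (intro continuous_intros conv_continuous R_continuous)
    have "continuous_on UNIV (\<lambda>z. h (s - z))" for s
      by (rule continuous_on_compose2[OF continuous_h]) (auto intro!: continuous_intros)
    then show "cmod (conv \<mu> f h s - R s) \<le> (\<integral>z. cmod (f z) \<partial>\<mu>) * \<delta>" for s
      using norm_integral_mult_sub_step_le[OF f_int continuous_imp_borel_measurable M B close]
      by (simp add: conv_def R_def c_def)
  qed
  ultimately show ?thesis by (simp add: c_def norm_mult)
qed

lemma character_integral_approx:
  assumes f: "f \<in> L2 \<mu>" and "\<delta> > 0"
  shows "cmod (\<phi> f - (\<integral>y. f y * \<gamma> y \<partial>\<mu>)) * cmod (\<phi> h)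
    \<le> \<delta> * ((\<integral>y. cmod (f y) \<partial>\<mu>) * (1 + cmod (\<phi> h)))"
proof -
  define I where "I = (\<integral>y. cmod (f y) \<partial>\<mu>)"
  obtain M where M: "\<And>z. cmod (\<gamma> z) \<le> M"
    using continuous_on_compact_UNIV_bounded[OF compact_UNIV continuous_gamma] by blast
  obtain V1 where V1: "open V1" "0 \<in> V1" "\<And>z v. v \<in> V1 \<Longrightarrow> dist (h (z + v)) (h z) < \<delta>"
    by (rule compact_group_uniformly_continuous[OF compact_UNIV continuous_h \<open>\<delta> > 0\<close>]) blast
  obtain V2 where V2: "open V2" "0 \<in> V2" "\<And>z v. v \<in> V2 \<Longrightarrow> dist (\<gamma> (z + v)) (\<gamma> z) < \<delta>"
    by (rule compact_group_uniformly_continuous[OF compact_UNIV continuous_gamma \<open>\<delta> > 0\<close>]) blast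
  obtain N and y :: "nat \<Rightarrow> 'a" and B where B: "\<And>j. B j \<in> sets borel" "disjoint_family B"
      "\<And>x. \<exists>j<N. x \<in> B j" and near: "\<And>j b. b \<in> B j \<Longrightarrow> b - y j \<in> V1 \<inter> V2"
    by (rule compact_group_borel_partition[of "V1 \<inter> V2"]) (use compact_UNIV V1 V2 in auto)
  define S where "S = (\<Sum>j<N. (\<integral>z. indicator (B j) z *\<^sub>R f z \<partial>\<mu>) * \<gamma> (y j))"
  have "cmod (h (s - z) - h (s - y j)) \<le> \<delta>" if "z \<in> B j" for j z s
    using V1(3)[of "z - y j" "s - z"] near[OF that] by (simp add: dist_norm norm_minus_commute)
  then have h_close: "cmod (\<phi> f - S) * cmod (\<phi> h) \<le> I * \<delta>"
    unfolding S_def I_def by (rule norm_character_sub_riemann_sum_le[OF f B])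
  have "cmod (\<gamma> z - \<gamma> (y j)) \<le> \<delta>" if "z \<in> B j" for j z
    using V2(3)[of "z - y j" "y j"] near[OF that] by (simp add: dist_norm)
  then have gamma_close: "cmod ((\<integral>z. f z * \<gamma> z \<partial>\<mu>) - S) \<le> I * \<delta>"
    using norm_integral_mult_sub_step_le[OF L2_integrable[OF f]
        continuous_imp_borel_measurable[OF continuous_gamma] M B]
    by (simp add: S_def I_def)
  have "cmod (\<phi> f - (\<integral>y. f y * \<gamma> y \<partial>\<mu>)) * cmod (\<phi> h)
      \<le> cmod (\<phi> f - S) * cmod (\<phi> h) + cmod ((\<integral>z. f z * \<gamma> z \<partial>\<mu>) - S) * cmod (\<phi> h)"
    using norm_triangle_ineq4[of "\<phi> f - S" "(\<integral>z. f z * \<gamma> z \<partial>\<mu>) - S"]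
    by (simp add: distrib_right[symmetric] mult_right_mono)
  also have "\<dots> \<le> I * \<delta> + I * \<delta> * cmod (\<phi> h)"
    using h_close gamma_close by (intro add_mono mult_right_mono) auto
  finally show ?thesis by (simp add: I_def algebra_simps)
qed

lemma character_eq_integral:
  assumes f: "f \<in> L2 \<mu>"
  shows "\<phi> f = (\<integral>y. f y * \<gamma> y \<partial>\<mu>)"
proof -
  define C where "C = (\<integral>y. cmod (f y) \<partial>\<mu>) * (1 + cmod (\<phi> h))"
  have "C \<ge> 0" by (simp add: C_def)
  have "cmod (\<phi> f - (\<integral>y. f y * \<gamma> y \<partial>\<mu>)) * cmod (\<phi> h) \<le> 0 + e" if "e > 0" for e
  proof -
    have "e / (C + 1) > 0" using \<open>e > 0\<close> \<open>C \<ge> 0\<close> by simp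
    then have "cmod (\<phi> f - (\<integral>y. f y * \<gamma> y \<partial>\<mu>)) * cmod (\<phi> h) \<le> e / (C + 1) * C"
      using character_integral_approx[OF f] by (simp only: C_def)
    also have "\<dots> \<le> e"
      using \<open>e > 0\<close> \<open>C \<ge> 0\<close> by (simp add: field_simps)
    finally show ?thesis by simp
  qed
  then have "cmod (\<phi> f - (\<integral>y. f y * \<gamma> y \<partial>\<mu>)) * cmod (\<phi> h) \<le> 0"
    by (rule field_le_epsilon)
  then show ?thesis
    using character_h by (simp add: mult_le_0_iff)
qed

lemma gamma_uminus_in_L2: "(\<lambda>x. \<gamma> (- x)) \<in> L2 \<mu>"
  by (intro continuous_in_L2 continuous_on_compose2[OF continuous_gamma]) (auto intro: continuous_intros)

lemma conv_gamma_uminus: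
  assumes f: "f \<in> L2 \<mu>"
  shows "conv \<mu> f (\<lambda>x. \<gamma> (- x)) = (\<lambda>x. \<phi> f * \<gamma> (- x))"
proof
  fix x
  obtain M where M: "\<And>z. cmod (\<gamma> z) \<le> M"
    using continuous_on_compact_UNIV_bounded[OF compact_UNIV continuous_gamma] by blast
  have "\<gamma> (- (x - y)) = \<gamma> y * \<gamma> (- x)" for y
    using gamma_add[of y "- x"] by (simp add: algebra_simps)
  then have "conv \<mu> f (\<lambda>x. \<gamma> (- x)) x = (\<integral>y. f y * \<gamma> y * \<gamma> (- x) \<partial>\<mu>)"
    by (simp add: conv_def mult.assoc)
  also have "\<dots> = (\<integral>y. f y * \<gamma> y \<partial>\<mu>) * \<gamma> (- x)"
    using integrable_mult_bounded[OF L2_integrable[OF f] continuous_imp_borel_measurable[OF continuous_gamma] M]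
    by simp
  finally show "conv \<mu> f (\<lambda>x. \<gamma> (- x)) x = \<phi> f * \<gamma> (- x)"
    by (simp add: character_eq_integral[OF f])
qed

lemma character_gamma_uminus: "\<phi> (\<lambda>x. \<gamma> (- x)) = 1"
proof -
  have "\<gamma> (- y) * \<gamma> y = 1" for y
    using gamma_add[of "- y" y] gamma_zero by simp
  then show ?thesis
    by (simp add: character_eq_integral[OF gamma_uminus_in_L2])
qed

end

section \<open>Derivations\<close>

lemma inner_derivation_if_conv_eigenfunction:
  assumes sm: "complex_scalar sm" and lm: "phi_bimodule \<mu> \<phi> sm lm"
    and D: "continuous_derivation \<mu> \<phi> sm lm D"
    and u: "u \<in> L2 \<mu>" "\<phi> u = 1" "\<And>f. f \<in> L2 \<mu> \<Longrightarrow> conv \<mu> f u = (\<lambda>x. \<phi> f * u x)"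
  shows "inner_derivation \<mu> \<phi> sm lm D"
  unfolding inner_derivation_def
proof (intro exI ballI)
  fix f assume f: "f \<in> L2 \<mu>"
  have sm_one: "sm 1 x = x" for x
    using sm unfolding complex_scalar_def by (metis of_real_1 scaleR_one)
  have "lm f (D u) + D f = D (conv \<mu> f u)"
    using D f u(1,2) unfolding continuous_derivation_def by (simp add: sm_one)
  also have "\<dots> = sm (\<phi> f) (D u)"
    using D u(1) u(3)[OF f] unfolding continuous_derivation_def by simp
  finally have "D f = sm (\<phi> f) (D u) - lm f (D u)"
    by (simp add: algebra_simps)
  moreover have "lm f (- D u) = - lm f (D u)"
    using lm f unfolding phi_bimodule_def by (intro additive.minus additive.intro) simp
  moreover have "sm (\<phi> f) (- D u) = - sm (\<phi> f) (D u)"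
    using sm unfolding complex_scalar_def by (intro additive.minus additive.intro) simp
  ultimately show "D f = lm f (- D u) - sm (\<phi> f) (- D u)" by simp
qed

theorem mainTheorem2:
  fixes \<mu> :: "'a::{topological_ab_group_add,t2_space} measure"
    and \<phi> :: "('a \<Rightarrow> complex) \<Rightarrow> complex"
  assumes "compact (UNIV :: 'a set)"
    and "normalized_haar \<mu>"
    and "is_character \<mu> \<phi>"
  shows "ess_left_phi_contractible TYPE('x::banach) \<mu> \<phi>"
proof -
  interpret L2_character \<mu> \<phi>
    by unfold_locales (fact assms)+
  obtain h where "continuous_on UNIV h" "\<phi> h \<noteq> 0"
    by (rule exists_continuous_character_nonzero)
  then interpret L2_character_test_function \<mu> \<phi> h
    by unfold_locales
  show ?thesis
    unfolding ess_left_phi_contractible_def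
    using inner_derivation_if_conv_eigenfunction[OF _ _ _ gamma_uminus_in_L2 character_gamma_uminus
        conv_gamma_uminus]
    by blast
qed

end
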